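(* Assume the setup below. If $b<e_K$, then $1+(\beta/2)(x-1)\mathfrak P_L\subseteq(1+\mathfrak P_M)^2\,(1+(\beta/2)(Y-1)\mathfrak P_M)$. For every $b$, $1+\beta\mathfrak P_L\subseteq(1+\mathfrak P_M)^2\,(1+(x-1)(Y-1)\mathfrak P_M)$. Consequently the inclusion $L\subseteq M$ induces well-defined homomorphisms $\mathcal L\to\mathcal M$ (when $b<e_K$) and $\mathcal L^*\to\mathcal M^*$.
   Context: $K$ is a finite extension of $\mathbb{Q}_2$, $e_K$ its absolute ramification index, $T$ its maximal unramified subextension, $q=2^{[T:\mathbb{Q}_2]}$; $\mathfrak P_F$ the maximal ideal of a field $F$. Setup: $M/K$ fully ramified biquadratic with a single break $b$, $M=K(x,y)$, $x^2=1+\beta$, $y^2=(1+(\omega+\mu)^2\beta)(1+4\lambda)$, $v_K(\beta)=2e_K-b$, $\omega\in\mathfrak O_T$ a $(q-1)$-th root of unity $\ne1$, $\mu\in K$ either $0$ or $0<v_K(\mu)<b/2$, $\lambda\in\mathfrak O_T$ either $0$ or a $(q-1)$-th root of unity with $z^2+z=\lambda$ irreducible over $T$; $L=K(x)$; $Y\in M$ defined by $yY=1+(\omega+\mu)(x-1)$. Groups: $\mathcal L=(1+\mathfrak P_L)/[(1+\mathfrak P_K)(1+\mathfrak P_L)^2(1+(\beta/2)(x-1)\mathfrak P_L)]$ and $\mathcal M=(1+\mathfrak P_M)/[(1+\mathfrak P_K)(1+\mathfrak P_M)^2(1+(\beta/2)(Y-1)\mathfrak P_M)]$ (for $b<e_K$);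 $\mathcal L^*=(1+\mathfrak P_L)/[(1+\mathfrak P_K)(1+\mathfrak P_L)^2(1+\beta\mathfrak P_L)]$ and $\mathcal M^*=(1+\mathfrak P_M)/[(1+\mathfrak P_K)(1+\mathfrak P_M)^2(1+(x-1)(Y-1)\mathfrak P_M)]$. *)

theory Defs
  imports Main
begin

text \<open>The ambient field is the type 'a; the top field M is the whole type.
  Valuations are functions v :: 'a => int whose value at 0 is irrelevant
  (0 is treated as having valuation +infinity via vge).\<close>

definition vge :: "('a::field \<Rightarrow> int) \<Rightarrow> int \<Rightarrow> 'a \<Rightarrow> bool" where
  "vge v n t \<longleftrightarrow> t = 0 \<or> n \<le> v t"

definition discrete_valuation :: "('a::field \<Rightarrow> int) \<Rightarrow> bool" where
  "discrete_valuation v \<longleftrightarrow>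
     (\<forall>a b. a \<noteq> 0 \<longrightarrow> b \<noteq> 0 \<longrightarrow> v (a * b) = v a + v b) \<and>
     (\<forall>a b. a \<noteq> 0 \<longrightarrow> b \<noteq> 0 \<longrightarrow> a + b \<noteq> 0 \<longrightarrow> min (v a) (v b) \<le> v (a + b)) \<and>
     (\<exists>p. p \<noteq> 0 \<and> v p = 1)"

definition val_cauchy :: "('a::field \<Rightarrow> int) \<Rightarrow> (nat \<Rightarrow> 'a) \<Rightarrow> bool" where
  "val_cauchy v s \<longleftrightarrow> (\<forall>N. \<exists>n0. \<forall>m\<ge>n0. \<forall>n\<ge>n0. vge v N (s m - s n))"

definition val_converges :: "('a::field \<Rightarrow> int) \<Rightarrow> (nat \<Rightarrow> 'a) \<Rightarrow> 'a \<Rightarrow> bool" where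
  "val_converges v s l \<longleftrightarrow> (\<forall>N. \<exists>n0. \<forall>n\<ge>n0. vge v N (s n - l))"

definition val_complete :: "('a::field \<Rightarrow> int) \<Rightarrow> bool" where
  "val_complete v \<longleftrightarrow> (\<forall>s. val_cauchy v s \<longrightarrow> (\<exists>l. val_converges v s l))"

definition val_closed :: "('a::field \<Rightarrow> int) \<Rightarrow> 'a set \<Rightarrow> bool" where
  "val_closed v E \<longleftrightarrow> (\<forall>s l. (\<forall>n. s n \<in> E) \<longrightarrow> val_converges v s l \<longrightarrow> l \<in> E)"

text \<open>Cardinality of the residue field of the valued subfield F: the least size of a
  set of representatives of O_F / P_F.\<close>
definition residue_card :: "('a::field \<Rightarrow> int) \<Rightarrow> 'a set \<Rightarrow> nat" where
  "residue_card v F = (LEAST n. \<exists>R. finite R \<and> card R = n \<and> R \<subseteq> {a\<in>F. vge v 0 a} \<and>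
       (\<forall>a\<in>F. vge v 0 a \<longrightarrow> (\<exists>r\<in>R. vge v 1 (a - r))))"

definition finite_residue :: "('a::field \<Rightarrow> int) \<Rightarrow> bool" where
  "finite_residue v \<longleftrightarrow> (\<exists>R. finite R \<and> (\<forall>a. vge v 0 a \<longrightarrow> (\<exists>r\<in>R. vge v 1 (a - r))))"

definition subfield :: "'a::field set \<Rightarrow> bool" where
  "subfield F \<longleftrightarrow> 0 \<in> F \<and> 1 \<in> F \<and> (\<forall>a\<in>F. \<forall>b\<in>F. a + b \<in> F \<and> a * b \<in> F) \<and>
     (\<forall>a\<in>F. - a \<in> F \<and> inverse a \<in> F)"

definition gen_field :: "'a::field set \<Rightarrow> 'a set \<Rightarrow> 'a set" where
  "gen_field F S = \<Inter>{E. subfield E \<and> F \<subseteq> E \<and> S \<subseteq> E}"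

definition degree_over :: "'a::field set \<Rightarrow> nat \<Rightarrow> bool" where
  "degree_over F n \<longleftrightarrow> (\<exists>f :: nat \<Rightarrow> 'a. \<forall>z. \<exists>!c. (\<forall>i<n. c i \<in> F) \<and> (\<forall>i\<ge>n. c i = 0) \<and>
       z = (\<Sum>i<n. c i * f i))"

definition field_aut :: "('a::field \<Rightarrow> 'a) \<Rightarrow> bool" where
  "field_aut s \<longleftrightarrow> bij s \<and> (\<forall>a b. s (a + b) = s a + s b \<and> s (a * b) = s a * s b) \<and> s 1 = 1"

definition galois_group :: "'a::field set \<Rightarrow> ('a \<Rightarrow> 'a) set" where
  "galois_group F = {s. field_aut s \<and> (\<forall>a\<in>F. s a = a)}"

definition unramified_over_Q2 :: "('a::field_char_0 \<Rightarrow> int) \<Rightarrow> 'a set \<Rightarrow> bool" where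
  "unramified_over_Q2 v E \<longleftrightarrow> v ` (E - {0}) = {n * v 2 | n. True}"

definition max_unram_sub :: "('a::field_char_0 \<Rightarrow> int) \<Rightarrow> 'a set \<Rightarrow> 'a set \<Rightarrow> bool" where
  "max_unram_sub v K T \<longleftrightarrow> subfield T \<and> val_closed v T \<and> T \<subseteq> K \<and> unramified_over_Q2 v T \<and>
     (\<forall>E. subfield E \<and> val_closed v E \<and> T \<subseteq> E \<and> E \<subseteq> K \<and> unramified_over_Q2 v E \<longrightarrow> E = T)"

text \<open>The monic quadratic z^2 + z - c is irreducible over F: it has no factorization
  (z - a)(z - b) with a, b in F (the only possible factorization into non-units).\<close>
definition irred_artin_schreier :: "'a::field set \<Rightarrow> 'a \<Rightarrow> bool" where
  "irred_artin_schreier F c \<longleftrightarrow> \<not> (\<exists>a\<in>F. \<exists>b\<in>F. a + b = -1 \<and> a * b = - c)"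

definition setmul :: "'a::field set \<Rightarrow> 'a set \<Rightarrow> 'a set" where
  "setmul A B = {a * b | a b. a \<in> A \<and> b \<in> B}"

definition squares :: "'a::field set \<Rightarrow> 'a set" where
  "squares A = {a * a | a. a \<in> A}"

definition one_plus :: "('a::field \<Rightarrow> int) \<Rightarrow> 'a \<Rightarrow> 'a set \<Rightarrow> 'a set" where
  "one_plus v c F = {1 + c * t | t. t \<in> F \<and> vge v 1 t}"

end

theory Submission
  imports Defs
begin

(* Let sigma be the automorphism of M/L; it fixes x and changes the sign of y, hence of Y.
   Since the ramification break of M/K is b, we have v (sigma a - a) >= v a + b for every a,
   with equality when v a is odd.  Applied to Y and to Y - kappa, where kappa in L makes
   v (Y - kappa) odd, this shows that b is odd, b < v 2, and that v (Y - kappa) = v 2 - b for a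
   unit kappa of L.

   Now let r in L have (necessarily even) valuation m.  Up to a factor 1 + r' with r' in L,
   v r' > m, and a factor 1 + h with h so small that it lies in the target 1 + c P_M, the element
   1 + r is a square (1 + rho)^2: if 4 divides m take rho in L with rho^2 close to r (squaring is
   bijective on the finite residue field of characteristic 2); otherwise take rho = l (Y - kappa)
   with l in L, using that (Y - kappa)^2 + 2 kappa (Y - kappa) = Y^2 - kappa^2 lies in L and has
   valuation 2 v 2 - 2 b, which is 2 mod 4.  Iterating until v r exceeds v c gives the
   inclusions, and they pass to the quotients because the factors coming from K and from
   squares of L are carried along. *)

section \<open>Discrete valuations\<close>

locale discrete_valued =
  fixes v :: "'a::field \<Rightarrow> int"
  assumes discrete_valuation: "discrete_valuation v"
begin

lemma v_mult: "a \<noteq> 0 \<Longrightarrow> c \<noteq> 0 \<Longrightarrow> v (a * c) = v a + v c"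
  using discrete_valuation unfolding discrete_valuation_def by blast

lemma v_add_ge_min: "a \<noteq> 0 \<Longrightarrow> c \<noteq> 0 \<Longrightarrow> a + c \<noteq> 0 \<Longrightarrow> min (v a) (v c) \<le> v (a + c)"
  using discrete_valuation unfolding discrete_valuation_def by blast

lemma obtain_uniformizer:
  obtains p where "p \<noteq> 0" "v p = 1"
  using discrete_valuation unfolding discrete_valuation_def by blast

lemma v_one [simp]: "v 1 = 0"
  using v_mult[of 1 1] by simp

lemma v_minus [simp]: "v (- a) = v a"
proof (cases "a = 0")
  case False
  have "v (-1) = 0" using v_mult[of "-1" "-1"] by simp
  then show ?thesis using v_mult[of "-1" a] False by simp
qed simp

lemma v_inverse: "a \<noteq> 0 \<Longrightarrow> v (inverse a) = - v a"
  using v_mult[of a "inverse a"] by simp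

lemma v_divide: "a \<noteq> 0 \<Longrightarrow> c \<noteq> 0 \<Longrightarrow> v (a / c) = v a - v c"
  by (simp add: divide_inverse v_mult v_inverse)

lemma v_power: "a \<noteq> 0 \<Longrightarrow> v (a ^ n) = int n * v a"
  by (induction n) (auto simp: v_mult algebra_simps)

lemma vge_zero [simp]: "vge v n 0"
  by (simp add: vge_def)

lemma vge_self: "vge v (v a) a"
  by (simp add: vge_def)

lemma vge_minus [simp]: "vge v n (- a) \<longleftrightarrow> vge v n a"
  by (simp add: vge_def)

lemma vge_mono: "vge v n a \<Longrightarrow> m \<le> n \<Longrightarrow> vge v m a"
  by (auto simp: vge_def)

lemma vge_add:
  assumes "vge v n a" "vge v n c"
  shows "vge v n (a + c)"
proof (cases "a = 0 \<or> c = 0 \<or> a + c = 0")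
  case False
  then show ?thesis using assms v_add_ge_min[of a c] by (auto simp: vge_def)
qed (use assms in auto)

lemma vge_diff: "vge v n a \<Longrightarrow> vge v n c \<Longrightarrow> vge v n (a - c)"
  using vge_add[of n a "- c"] by simp

lemma vge_mult: "vge v n a \<Longrightarrow> vge v m c \<Longrightarrow> vge v (n + m) (a * c)"
  unfolding vge_def by (metis add_mono mult_eq_0_iff v_mult)

lemma vge_mult_right: "vge v n a \<Longrightarrow> vge v (n + v c) (a * c)"
  using vge_mult[OF _ vge_self] .

lemma vge_mult_left: "vge v n a \<Longrightarrow> vge v (v c + n) (c * a)"
  using vge_mult[OF vge_self] .

lemma vge_divide: "vge v n a \<Longrightarrow> c \<noteq> 0 \<Longrightarrow> vge v (n - v c) (a / c)"
  by (cases "a = 0") (auto simp: vge_def v_divide)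

lemma v_add_dominated:
  assumes "a \<noteq> 0" "vge v (v a + 1) c"
  shows "a + c \<noteq> 0" "v (a + c) = v a"
proof -
  have "a + c \<noteq> 0 \<and> v (a + c) = v a"
  proof (cases "c = 0")
    case False
    then have "v a < v c" using assms by (simp add: vge_def)
    moreover have "a + c \<noteq> 0"
    proof
      assume "a + c = 0"
      then have "c = - a" by (simp add: eq_neg_iff_add_eq_0 add.commute)
      then show False using \<open>v a < v c\<close> by simp
    qed
    moreover have "min (v (a + c)) (v (- c)) \<le> v a"
      using v_add_ge_min[of "a + c" "- c"] calculation False assms(1) by simp
    ultimately show ?thesis using v_add_ge_min[of a c] False assms(1) by simp
  qed (use assms in simp)
  then show "a + c \<noteq> 0" "v (a + c) = v a" by auto
qed

lemma v_add_distinct: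
  assumes "a \<noteq> 0" "c \<noteq> 0" "v a \<noteq> v c"
  shows "a + c \<noteq> 0" "v (a + c) = min (v a) (v c)"
proof -
  have "a + c \<noteq> 0 \<and> v (a + c) = min (v a) (v c)"
  proof (cases "v a < v c")
    case True
    then show ?thesis using v_add_dominated[of a c] assms by (simp add: vge_def)
  next
    case False
    then show ?thesis using v_add_dominated[of c a] assms by (simp add: vge_def add.commute)
  qed
  then show "a + c \<noteq> 0" "v (a + c) = min (v a) (v c)" by auto
qed

lemma v_one_plus:
  assumes "c \<noteq> 0" "v c \<noteq> 0"
  shows "1 + c \<noteq> 0" "v (1 + c) = min (v c) 0"
  using v_add_distinct[of 1 c] assms by (auto simp: min.commute)

lemma v_sum_cases:
  assumes "a = c + d" "a \<noteq> 0" "c \<noteq> 0" "d \<noteq> 0"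
  shows "v a = v c \<or> v a = v d \<or> v c = v d"
proof (cases "v c = v d")
  case False
  then show ?thesis using v_add_distinct(2)[of c d] assms by (auto simp: min_def)
qed simp

lemma one_plus_mult:
  assumes "a \<in> one_plus v 1 UNIV" "c \<in> one_plus v 1 UNIV"
  shows "a * c \<in> one_plus v 1 UNIV"
proof -
  obtain s t where st: "a = 1 + s" "vge v 1 s" "c = 1 + t" "vge v 1 t"
    using assms unfolding one_plus_def by auto
  have "a * c = 1 + 1 * (s + t + s * t)" using st by (simp add: algebra_simps)
  moreover have "vge v 1 (s + t + s * t)"
    using vge_add[OF vge_add[OF st(2) st(4)] vge_mono[OF vge_mult[OF st(2) st(4)]]] by simp
  ultimately show ?thesis unfolding one_plus_def by blast
qed

lemma nonzero_induct_uniformizer: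
  assumes p: "p \<noteq> 0" "v p = 1" and a: "a \<noteq> 0"
    and unit: "\<And>u. u \<noteq> 0 \<Longrightarrow> v u = 0 \<Longrightarrow> P u" and uniformizer: "P p"
    and mult: "\<And>c d. c \<noteq> 0 \<Longrightarrow> d \<noteq> 0 \<Longrightarrow> P c \<Longrightarrow> P d \<Longrightarrow> P (c * d)"
    and inverse: "\<And>c. c \<noteq> 0 \<Longrightarrow> P c \<Longrightarrow> P (inverse c)"
  shows "P a"
proof -
  have pow: "P (p ^ n)" for n
  proof (induction n)
    case (Suc n)
    then show ?case using mult[of p "p ^ n"] p uniformizer by simp
  qed (use unit in simp)
  define n where "n = nat \<bar>v a\<bar>"
  define pn where "pn = (if v a \<ge> 0 then p ^ n else inverse (p ^ n))"
  have "p ^ n \<noteq> 0" "v (p ^ n) = \<bar>v a\<bar>" unfolding n_def using p by (simp_all add: v_power)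
  then have pn: "pn \<noteq> 0" "v pn = v a" "P pn"
    unfolding pn_def using pow[of n] inverse[of "p ^ n"] by (simp_all add: v_inverse)
  define u where "u = a / pn"
  have "u \<noteq> 0" "v u = 0" unfolding u_def using a pn by (auto simp: v_divide)
  moreover have "a = pn * u" unfolding u_def using pn by simp
  ultimately show ?thesis using mult[OF pn(1) _ pn(3) unit] by simp
qed

end

section \<open>Subfields, quadratic extensions and automorphisms\<close>

lemma subfield_0: "subfield F \<Longrightarrow> 0 \<in> F" by (simp add: subfield_def)
lemma subfield_1: "subfield F \<Longrightarrow> 1 \<in> F" by (simp add: subfield_def)
lemma subfield_add: "subfield F \<Longrightarrow> a \<in> F \<Longrightarrow> b \<in> F \<Longrightarrow> a + b \<in> F" by (simp add: subfield_def)
lemma subfield_mult: "subfield F \<Longrightarrow> a \<in> F \<Longrightarrow> b \<in> F \<Longrightarrow> a * b \<in> F" by (simp add: subfield_def)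
lemma subfield_uminus: "subfield F \<Longrightarrow> a \<in> F \<Longrightarrow> - a \<in> F" by (simp add: subfield_def)
lemma subfield_inverse: "subfield F \<Longrightarrow> a \<in> F \<Longrightarrow> inverse a \<in> F" by (simp add: subfield_def)

lemma subfield_diff: "subfield F \<Longrightarrow> a \<in> F \<Longrightarrow> b \<in> F \<Longrightarrow> a - b \<in> F"
  using subfield_add[of F a "- b"] subfield_uminus[of F b] by simp

lemma subfield_divide: "subfield F \<Longrightarrow> a \<in> F \<Longrightarrow> b \<in> F \<Longrightarrow> a / b \<in> F"
  by (simp add: divide_inverse subfield_mult subfield_inverse)

lemma subfield_numeral: "subfield F \<Longrightarrow> (numeral n :: 'a::field) \<in> F"
proof -
  assume F: "subfield F"
  have "(of_nat m :: 'a) \<in> F" for m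
    by (induction m) (auto simp: F subfield_0 subfield_1 subfield_add add.commute)
  from this[of "numeral n"] show ?thesis by simp
qed

lemma subfield_gen_field: "subfield (gen_field F S)"
  unfolding gen_field_def subfield_def by blast

lemma gen_field_base: "F \<subseteq> gen_field F S"
  unfolding gen_field_def by blast

lemma gen_field_gens: "S \<subseteq> gen_field F S"
  unfolding gen_field_def by blast

lemma gen_field_least: "subfield E \<Longrightarrow> F \<subseteq> E \<Longrightarrow> S \<subseteq> E \<Longrightarrow> gen_field F S \<subseteq> E"
  unfolding gen_field_def by blast

definition quad_span :: "'a::field set \<Rightarrow> 'a \<Rightarrow> 'a set" where
  "quad_span F w = {a + c * w | a c. a \<in> F \<and> c \<in> F}"

lemma quad_spanI: "a \<in> F \<Longrightarrow> c \<in> F \<Longrightarrow> a + c * w \<in> quad_span F w"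
  unfolding quad_span_def by blast

lemma quad_spanE:
  assumes "e \<in> quad_span F w"
  obtains a c where "a \<in> F" "c \<in> F" "e = a + c * w"
  using assms unfolding quad_span_def by blast

lemma base_subset_quad_span: "subfield F \<Longrightarrow> F \<subseteq> quad_span F w"
  using quad_spanI[of _ F 0 w] subfield_0 by fastforce

lemma gen_in_quad_span: "subfield F \<Longrightarrow> w \<in> quad_span F w"
  using quad_spanI[of 0 F 1 w] subfield_0 subfield_1 by fastforce

lemma quad_span_add:
  assumes F: "subfield F" and e: "e \<in> quad_span F w" and e': "e' \<in> quad_span F w"
  shows "e + e' \<in> quad_span F w"
proof -
  obtain a c where ac: "a \<in> F" "c \<in> F" "e = a + c * w" using e by (rule quad_spanE)
  obtain a' c' where ac': "a' \<in> F" "c' \<in> F" "e' = a' + c' * w" using e' by (rule quad_spanE)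
  have "e + e' = (a + a') + (c + c') * w" using ac ac' by (simp add: algebra_simps)
  also have "\<dots> \<in> quad_span F w" using ac ac' subfield_add[OF F] by (intro quad_spanI) simp_all
  finally show ?thesis .
qed

lemma quad_span_mult:
  assumes F: "subfield F" and ww: "w * w \<in> F"
    and e: "e \<in> quad_span F w" and e': "e' \<in> quad_span F w"
  shows "e * e' \<in> quad_span F w"
proof -
  note closed = subfield_add[OF F] subfield_mult[OF F]
  obtain a c where ac: "a \<in> F" "c \<in> F" "e = a + c * w" using e by (rule quad_spanE)
  obtain a' c' where ac': "a' \<in> F" "c' \<in> F" "e' = a' + c' * w" using e' by (rule quad_spanE)
  have "e * e' = (a * a' + c * c' * (w * w)) + (a * c' + c * a') * w"
    using ac ac' by (simp add: algebra_simps)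
  also have "\<dots> \<in> quad_span F w" using ac ac' ww closed by (intro quad_spanI) simp_all
  finally show ?thesis .
qed

lemma quad_span_uminus:
  assumes F: "subfield F" and e: "e \<in> quad_span F w"
  shows "- e \<in> quad_span F w"
proof -
  obtain a c where ac: "a \<in> F" "c \<in> F" "e = a + c * w" using e by (rule quad_spanE)
  then have "- e = (- a) + (- c) * w" by simp
  also have "\<dots> \<in> quad_span F w" using ac subfield_uminus[OF F] by (intro quad_spanI) simp_all
  finally show ?thesis .
qed

lemma quad_span_inverse:
  assumes F: "subfield F" and ww: "w * w \<in> F" and e: "e \<in> quad_span F w"
  shows "inverse e \<in> quad_span F w"
proof -
  note closed = subfield_add[OF F] subfield_mult[OF F] subfield_uminus[OF F] subfield_diff[OF F]
    subfield_divide[OF F]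
  obtain a c where ac: "a \<in> F" "c \<in> F" "e = a + c * w" using e by (rule quad_spanE)
  define D where "D = a * a - c * c * (w * w)"
  have D: "D \<in> F" "D = e * (a - c * w)"
    unfolding D_def using ac ww closed by (auto simp: algebra_simps)
  show ?thesis
  proof (cases "D = 0")
    case False
    then have "e \<noteq> 0" "a - c * w \<noteq> 0" using D(2) by auto
    then have "inverse e = (a - c * w) / D"
      unfolding D(2) by (simp add: field_simps)
    also have "\<dots> = a / D + (- c / D) * w"
      by (simp add: diff_divide_distrib)
    also have "\<dots> \<in> quad_span F w" using ac D(1) closed by (intro quad_spanI) simp_all
    finally show ?thesis .
  next
    case True
    \<comment> \<open>\<open>e\<close> is a zero of its conjugate, so \<open>e = 2 a\<close> already lies in \<open>F\<close>\<close>
    then have "e = 0 \<or> e = a + a" using D(2) ac(3) by auto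
    moreover have "inverse (a + a) \<in> F" by (rule subfield_inverse[OF F closed(1)[OF ac(1) ac(1)]])
    ultimately have "inverse e \<in> F" using subfield_0[OF F] by auto
    then show ?thesis using base_subset_quad_span[OF F] by blast
  qed
qed

lemma subfield_quad_span:
  assumes F: "subfield F" and ww: "w * w \<in> F"
  shows "subfield (quad_span F w)"
proof -
  have "0 \<in> quad_span F w" "1 \<in> quad_span F w"
    using base_subset_quad_span[OF F] subfield_0[OF F] subfield_1[OF F] by auto
  then show ?thesis
    unfolding subfield_def
    using quad_span_add[OF F] quad_span_mult[OF F ww] quad_span_uminus[OF F] quad_span_inverse[OF F ww]
    by simp
qed

lemma quad_span_relation:
  assumes F: "subfield F" and "e \<in> quad_span F w" "u \<in> quad_span F w"
  shows "u \<in> F \<or> (\<exists>c\<in>F. \<exists>d\<in>F. \<exists>f\<in>F. c \<noteq> 0 \<and> c * e = d * u + f)"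
proof -
  obtain a c where u: "a \<in> F" "c \<in> F" "u = a + c * w" using assms(3) by (rule quad_spanE)
  obtain a' c' where e: "a' \<in> F" "c' \<in> F" "e = a' + c' * w" using assms(2) by (rule quad_spanE)
  show ?thesis
  proof (cases "c = 0")
    case False
    have "c * e = c' * u + (c * a' - c' * a)" using u e by (simp add: algebra_simps)
    moreover have "c * a' - c' * a \<in> F" using u e F by (simp add: subfield_diff subfield_mult)
    ultimately show ?thesis
      using False u(2) e(2) by (intro disjI2 bexI[of _ c] bexI[of _ c'] bexI[of _ "c * a' - c' * a"]) auto
  qed (use u in simp)
qed

lemma field_aut_add: "field_aut s \<Longrightarrow> s (a + b) = s a + s b" by (simp add: field_aut_def)
lemma field_aut_mult: "field_aut s \<Longrightarrow> s (a * b) = s a * s b" by (simp add: field_aut_def)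
lemma field_aut_1: "field_aut s \<Longrightarrow> s 1 = 1" by (simp add: field_aut_def)

lemma field_aut_0: "field_aut s \<Longrightarrow> s 0 = (0::'a::field)"
  using field_aut_add[of s 0 0] by (metis add_cancel_right_right add_0)

lemma field_aut_uminus: "field_aut s \<Longrightarrow> s (- a) = - s (a::'a::field)"
  using field_aut_add[of s a "- a"] field_aut_0[of s] by (simp add: eq_neg_iff_add_eq_0 add.commute)

lemma field_aut_diff: "field_aut s \<Longrightarrow> s (a - b) = s a - s (b::'a::field)"
  using field_aut_add[of s a "- b"] field_aut_uminus[of s b] by simp

lemma field_aut_eq_0_iff: "field_aut s \<Longrightarrow> s a = 0 \<longleftrightarrow> a = (0::'a::field)"
  using field_aut_0[of s] by (metis bij_def field_aut_def injD)

lemma field_aut_inverse: "field_aut s \<Longrightarrow> s (inverse a) = inverse (s (a::'a::field))"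
proof (cases "a = 0")
  case False
  assume s: "field_aut s"
  have "s a * s (inverse a) = 1" using field_aut_mult[OF s, of a "inverse a"] field_aut_1[OF s] False by simp
  then show ?thesis by (metis inverse_unique)
qed (simp add: field_aut_0)

lemma field_aut_divide: "field_aut s \<Longrightarrow> s (a / b) = s a / s (b::'a::field)"
  by (simp add: divide_inverse field_aut_mult field_aut_inverse)

lemma field_aut_power: "field_aut s \<Longrightarrow> s (a ^ n) = s (a::'a::field) ^ n"
  by (induction n) (auto simp: field_aut_1 field_aut_mult)


lemma subfield_field_aut_agree:
  assumes "field_aut s" "field_aut s'"
  shows "subfield {a::'a::field. s a = s' a}"
  using assms unfolding subfield_def
  by (simp add: field_aut_0 field_aut_1 field_aut_add field_aut_mult field_aut_uminus field_aut_inverse)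

section \<open>Value groups and residue fields\<close>

context discrete_valued
begin

lemma obtain_value_of_four_dvd:
  assumes "v ` (K - {0}) = {4 * n | n. True}" "4 dvd m"
  obtains k where "k \<in> K" "k \<noteq> 0" "v k = m"
proof -
  obtain j where "m = 4 * j" using assms(2) by (elim dvdE)
  then have "m \<in> v ` (K - {0})" using assms(1) by auto
  then show thesis using that by auto
qed

lemma quad_span_value_classes:
  assumes F: "subfield F" and F_values: "\<And>f. f \<in> F \<Longrightarrow> f \<noteq> 0 \<Longrightarrow> n dvd v f"
    and e: "e \<in> quad_span F w" "e \<noteq> 0" "\<not> n dvd v e"
    and u: "u \<in> quad_span F w" "u \<noteq> 0"
  shows "n dvd v u \<or> n dvd v u - v e"
proof (cases "u \<in> F")
  case False
  then obtain c d f where cdf: "c \<in> F" "d \<in> F" "f \<in> F" "c \<noteq> 0" and rel: "c * e = d * u + f"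
    using quad_span_relation[OF F e(1) u(1)] by blast
  have vce: "v (c * e) = v c + v e" and "c * e \<noteq> 0" using cdf e by (simp_all add: v_mult)
  have nc: "n dvd v c" using F_values cdf by blast
  show ?thesis
  proof (rule ccontr)
    assume neither: "\<not> ?thesis"
    have "d \<noteq> 0"
    proof
      assume "d = 0"
      then have "n dvd v c + v e" using rel F_values[of f] cdf \<open>c * e \<noteq> 0\<close> vce by simp
      then show False using nc e(3) by (simp add: dvd_add_right_iff)
    qed
    then have vdu: "v (d * u) = v d + v u" "d * u \<noteq> 0" and nd: "n dvd v d"
      using u F_values cdf by (simp_all add: v_mult)
    have "f \<noteq> 0"
    proof
      assume "f = 0"
      then have "v u - v e = v c - v d" using rel vce vdu by simp
      then show False using neither dvd_diff[OF nc nd] by simp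
    qed
    then have nf: "n dvd v f" using F_values cdf by blast
    consider "v (c * e) = v (d * u)" | "v (c * e) = v f" | "v (d * u) = v f"
      using v_sum_cases[OF rel \<open>c * e \<noteq> 0\<close> vdu(2) \<open>f \<noteq> 0\<close>] by blast
    then show False
    proof cases
      case 1
      then have "v u - v e = v c - v d" using vce vdu by simp
      then show False using neither dvd_diff[OF nc nd] by simp
    next
      case 2
      then have "v e = v f - v c" using vce by simp
      then show False using e(3) dvd_diff[OF nf nc] by simp
    next
      case 3
      then have "v u = v f - v d" using vdu by simp
      then show False using neither dvd_diff[OF nf nd] by simp
    qed
  qed
qed (use F_values u in blast)

lemma quad_span_residue_rep:
  assumes F: "subfield F" and F_values: "\<And>f. f \<in> F \<Longrightarrow> f \<noteq> 0 \<Longrightarrow> n dvd v f"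
    and e: "e \<in> quad_span F w" "e \<noteq> 0" "\<not> n dvd v e"
    and u: "u \<in> quad_span F w" "u \<noteq> 0" "v u = 0"
  shows "\<exists>f\<in>F. vge v 1 (u - f)"
proof (cases "u \<in> F")
  case False
  then obtain c d f where cdf: "c \<in> F" "d \<in> F" "f \<in> F" "c \<noteq> 0" and rel: "c * e = d * u + f"
    using quad_span_relation[OF F e(1) u(1)] by blast
  have ce: "c * e \<noteq> 0" "\<not> n dvd v (c * e)"
    using cdf e F_values[of c] by (auto simp: v_mult dvd_add_right_iff)
  have "d \<noteq> 0"
    using rel ce F_values[of f] cdf by auto
  then have du: "d * u \<noteq> 0" "v (d * u) = v d" "n dvd v d"
    using u F_values cdf by (simp_all add: v_mult)
  have "f \<noteq> 0" using rel ce du by auto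
  then have "n dvd v f" using F_values cdf by blast
  then have "v (c * e) \<noteq> v (d * u)" "v (c * e) \<noteq> v f" using ce du by auto
  then have "v (d * u) = v f"
    using v_sum_cases[OF rel ce(1) du(1) \<open>f \<noteq> 0\<close>] by blast
  then have "v d < v (c * e)"
    using v_add_ge_min[of "d * u" f] rel ce du \<open>f \<noteq> 0\<close> \<open>v (c * e) \<noteq> v (d * u)\<close> by simp
  moreover have "u - (- f / d) = c * e / d" using rel \<open>d \<noteq> 0\<close> by (simp add: field_simps)
  ultimately have "vge v 1 (u - (- f / d))" using ce \<open>d \<noteq> 0\<close> by (simp add: vge_def v_divide)
  moreover have "- f / d \<in> F" using F cdf by (simp add: subfield_divide subfield_uminus)
  ultimately show ?thesis by blast
qed (metis diff_self vge_zero)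

lemma v_root_of_unity:
  assumes "a ^ n = 1" "n \<noteq> 0"
  shows "v a = 0"
proof -
  have "a \<noteq> 0" using assms by (auto simp: power_0_left)
  then have "int n * v a = 0" using assms v_power[of a n] by simp
  then show ?thesis using assms(2) by simp
qed

definition residue_reps :: "'a set \<Rightarrow> 'a set \<Rightarrow> bool" where
  "residue_reps F R \<longleftrightarrow> R \<subseteq> {a \<in> F. vge v 0 a} \<and> (\<forall>a\<in>F. vge v 0 a \<longrightarrow> (\<exists>r\<in>R. vge v 1 (a - r)))"

lemma residue_card_eq_Least:
  "residue_card v F = (LEAST n. \<exists>R. finite R \<and> card R = n \<and> residue_reps F R)"
  unfolding residue_card_def residue_reps_def by simp

lemma finite_residue_reps_exist:
  assumes "finite_residue v"
  obtains R where "finite R" "residue_reps F R"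
proof -
  obtain R0 where R0: "finite R0" "\<And>a. vge v 0 a \<Longrightarrow> \<exists>r\<in>R0. vge v 1 (a - r)"
    using assms unfolding finite_residue_def by blast
  \<comment> \<open>replace each representative in \<open>R0\<close> that is close to an element of \<open>F\<close> by such an element\<close>
  define near where "near r = (SOME a. a \<in> F \<and> vge v 0 a \<and> vge v 1 (a - r))" for r
  define R where "R = near ` {r \<in> R0. \<exists>a\<in>F. vge v 0 a \<and> vge v 1 (a - r)}"
  have near: "near r \<in> F" "vge v 0 (near r)" "vge v 1 (near r - r)"
    if "\<exists>a\<in>F. vge v 0 a \<and> vge v 1 (a - r)" for r
    using someI_ex[of "\<lambda>a. a \<in> F \<and> vge v 0 a \<and> vge v 1 (a - r)"] that unfolding near_def by auto
  have "residue_reps F R"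
    unfolding residue_reps_def
  proof (intro conjI ballI impI)
    show "R \<subseteq> {a \<in> F. vge v 0 a}" unfolding R_def using near by auto
    fix a assume a: "a \<in> F" "vge v 0 a"
    obtain r where r: "r \<in> R0" "vge v 1 (a - r)" using R0(2) a(2) by blast
    have ex: "\<exists>a\<in>F. vge v 0 a \<and> vge v 1 (a - r)" using a r by blast
    have "vge v 1 ((a - r) - (near r - r))" using vge_diff[OF r(2) near(3)[OF ex]] .
    then have "vge v 1 (a - near r)" by simp
    moreover have "near r \<in> R" unfolding R_def using r(1) ex by blast
    ultimately show "\<exists>r\<in>R. vge v 1 (a - r)" by blast
  qed
  moreover have "finite R" unfolding R_def using R0(1) by simp
  ultimately show thesis using that by blast
qed

lemma residue_card_ge_two:
  assumes "finite_residue v" and F: "0 \<in> F" "1 \<in> F"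
  shows "2 \<le> residue_card v F"
proof -
  obtain R where "finite R" "residue_reps F R" using finite_residue_reps_exist[OF assms(1)] .
  then have "\<exists>R'. finite R' \<and> card R' = card R \<and> residue_reps F R'" by blast
  then have "\<exists>R'. finite R' \<and> card R' = residue_card v F \<and> residue_reps F R'"
    unfolding residue_card_eq_Least by (rule LeastI)
  then obtain R' where R': "finite R'" "card R' = residue_card v F" "residue_reps F R'" by blast
  then have rep: "\<And>a. a \<in> F \<Longrightarrow> vge v 0 a \<Longrightarrow> \<exists>r\<in>R'. vge v 1 (a - r)"
    unfolding residue_reps_def by blast
  obtain r0 where r0: "r0 \<in> R'" "vge v 1 (0 - r0)" using rep[of 0] F by auto
  obtain r1 where r1: "r1 \<in> R'" "vge v 1 (1 - r1)" using rep[of 1] F by (auto simp: vge_def)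
  have "r0 \<noteq> r1"
  proof
    assume "r0 = r1"
    then have "vge v 1 (1::'a)" using vge_diff[OF r1(2) r0(2)] by simp
    then show False by (simp add: vge_def)
  qed
  then have "card {r0, r1} \<le> card R'" using r0 r1 R'(1) by (intro card_mono) auto
  then show ?thesis using R'(2) \<open>r0 \<noteq> r1\<close> by simp
qed

lemma residue_square_inj:
  assumes "0 < v 2" "vge v 0 a" "vge v 0 c" "vge v 1 (a * a - c * c)"
  shows "vge v 1 (a - c)"
proof -
  have "vge v (v 2 + 0 + 0) (2 * c * (a - c))"
    using vge_mult[OF vge_mult[OF vge_self assms(3)] vge_diff[OF assms(2,3)]] .
  then have "vge v 1 (2 * c * (a - c))" by (rule vge_mono) (use assms(1) in simp)
  from vge_diff[OF assms(4) this] have "vge v 1 ((a - c) * (a - c))" by (simp add: algebra_simps)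
  then show ?thesis by (cases "a - c = 0") (auto simp: vge_def v_mult)
qed

definition residue_class :: "'a \<Rightarrow> 'a set" where
  "residue_class a = {w. vge v 1 (w - a)}"

definition square_class :: "'a set \<Rightarrow> 'a set" where
  "square_class S = {w. \<exists>a\<in>S. vge v 1 (w - a * a)}"

lemma residue_class_self: "a \<in> residue_class a"
  by (simp add: residue_class_def)

lemma residue_class_eqI:
  assumes "vge v 1 (a - c)"
  shows "residue_class a = residue_class c"
proof -
  have "vge v 1 (w - a) \<longleftrightarrow> vge v 1 (w - c)" for w
    using vge_add[of 1 "w - a" "a - c"] vge_diff[of 1 "w - c" "a - c"] assms by auto
  then show ?thesis unfolding residue_class_def by blast
qed

lemma square_class_residue_class:
  assumes a: "vge v 0 a"
  shows "square_class (residue_class a) = residue_class (a * a)"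
proof (intro equalityI subsetI)
  fix w assume "w \<in> square_class (residue_class a)"
  then obtain a' where a': "vge v 1 (a' - a)" "vge v 1 (w - a' * a')"
    unfolding square_class_def residue_class_def by blast
  have "vge v 0 (a' + a)"
    using vge_add[OF vge_add[OF a a] vge_mono[OF a'(1)]] by (simp add: algebra_simps)
  from vge_mult[OF a'(1) this] have "vge v 1 (a' * a' - a * a)" by (simp add: algebra_simps)
  from vge_add[OF a'(2) this] show "w \<in> residue_class (a * a)" unfolding residue_class_def by simp
next
  fix w assume "w \<in> residue_class (a * a)"
  then show "w \<in> square_class (residue_class a)"
    unfolding square_class_def using residue_class_self[of a] unfolding residue_class_def by blast
qed

lemma finite_residue_classes:
  assumes "finite_residue v"
  shows "finite (residue_class ` {a \<in> F. vge v 0 a})"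
proof -
  obtain R where R: "finite R" "\<And>a. vge v 0 a \<Longrightarrow> \<exists>r\<in>R. vge v 1 (a - r)"
    using assms unfolding finite_residue_def by blast
  have "residue_class a \<in> residue_class ` R" if "vge v 0 a" for a
  proof -
    obtain r where "r \<in> R" "vge v 1 (a - r)" using R(2) \<open>vge v 0 a\<close> by blast
    then show ?thesis using residue_class_eqI[of a r] by blast
  qed
  then show ?thesis using R(1) by (blast intro: finite_subset)
qed

text \<open>Squaring is injective on the finite residue field of characteristic 2, hence surjective.\<close>
lemma residue_square_root:
  assumes fin: "finite_residue v" and two: "0 < v 2" and F: "subfield F"
    and u: "u \<in> F" "vge v 0 u"
  shows "\<exists>s\<in>F. vge v 1 (u - s * s)"
proof -
  define integral where "integral = {a \<in> F. vge v 0 a}"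
  let ?C = "residue_class ` integral"
  have maps: "square_class ` ?C \<subseteq> ?C"
  proof
    fix w assume "w \<in> square_class ` ?C"
    then obtain a where a: "a \<in> integral" "w = square_class (residue_class a)" by blast
    then have "w = residue_class (a * a)" "a * a \<in> integral"
      using square_class_residue_class F vge_mult[of 0 a 0 a] unfolding integral_def
      by (auto simp: subfield_mult)
    then show "w \<in> ?C" by blast
  qed
  have "inj_on square_class ?C"
  proof (rule inj_onI)
    fix S S' assume "S \<in> ?C" "S' \<in> ?C" "square_class S = square_class S'"
    then obtain a c where ac: "a \<in> integral" "c \<in> integral" "S = residue_class a" "S' = residue_class c"
      and eq: "square_class (residue_class a) = square_class (residue_class c)" by blast
    then have "residue_class (a * a) = residue_class (c * c)"
      using square_class_residue_class unfolding integral_def by simp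
    then have "vge v 1 (a * a - c * c)"
      using residue_class_self[of "a * a"] unfolding residue_class_def by blast
    then have "vge v 1 (a - c)" using residue_square_inj[OF two] ac(1,2) unfolding integral_def by blast
    then show "S = S'" using residue_class_eqI ac(3,4) by blast
  qed
  moreover have "finite ?C" unfolding integral_def by (rule finite_residue_classes[OF fin])
  ultimately have "square_class ` ?C = ?C" using endo_inj_surj maps by blast
  moreover have "residue_class u \<in> ?C" unfolding integral_def using u by blast
  ultimately have "residue_class u \<in> square_class ` ?C" by simp
  then obtain s where s: "s \<in> integral" "residue_class u = square_class (residue_class s)" by blast
  then have "residue_class u = residue_class (s * s)"
    using square_class_residue_class unfolding integral_def by simp
  then have "vge v 1 (u - s * s)" using residue_class_self[of u] unfolding residue_class_def by blast
  then show ?thesis using s(1) unfolding integral_def by blast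
qed

abbreviation squares_times_one_plus :: "'a \<Rightarrow> 'a set" where
  "squares_times_one_plus c \<equiv> setmul (squares (one_plus v 1 UNIV)) (one_plus v c UNIV)"

lemma mem_squares_times_one_plus_iff:
  "z \<in> squares_times_one_plus c \<longleftrightarrow>
    (\<exists>u t. vge v 1 u \<and> vge v 1 t \<and> z = (1 + u) * (1 + u) * (1 + c * t))"
proof
  assume "z \<in> squares_times_one_plus c"
  then obtain a d where "z = a * d" "a \<in> squares (one_plus v 1 UNIV)" "d \<in> one_plus v c UNIV"
    unfolding setmul_def by blast
  then show "\<exists>u t. vge v 1 u \<and> vge v 1 t \<and> z = (1 + u) * (1 + u) * (1 + c * t)"
    unfolding squares_def one_plus_def by auto
next
  assume "\<exists>u t. vge v 1 u \<and> vge v 1 t \<and> z = (1 + u) * (1 + u) * (1 + c * t)"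
  then obtain u t where ut: "vge v 1 u" "vge v 1 t" "z = (1 + u) * (1 + u) * (1 + c * t)" by blast
  then have "(1 + u) * (1 + u) \<in> squares (one_plus v 1 UNIV)" "1 + c * t \<in> one_plus v c UNIV"
    unfolding squares_def one_plus_def by auto
  then show "z \<in> squares_times_one_plus c" unfolding setmul_def ut(3) by blast
qed

lemma one_plus_in_squares_times_one_plus:
  assumes "c \<noteq> 0" "vge v (v c + 1) r"
  shows "1 + r \<in> squares_times_one_plus c"
proof -
  have "vge v 1 (r / c)" using vge_divide[OF assms(2,1)] by simp
  moreover have "1 + r = (1 + 0) * (1 + 0) * (1 + c * (r / c))" using assms(1) by simp
  ultimately show ?thesis unfolding mem_squares_times_one_plus_iff
    by (intro exI[of _ 0] exI[of _ "r / c"]) simp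
qed

lemma squares_times_one_plus_mult:
  assumes c: "c \<noteq> 0" "0 \<le> v c" and \<rho>: "vge v 1 \<rho>" and h: "vge v (v c + 1) h"
    and z: "z \<in> squares_times_one_plus c"
  shows "(1 + \<rho>) * (1 + \<rho>) * z * (1 + h) \<in> squares_times_one_plus c"
proof -
  obtain u t where ut: "vge v 1 u" "vge v 1 t" "z = (1 + u) * (1 + u) * (1 + c * t)"
    using z unfolding mem_squares_times_one_plus_iff by blast
  have hc: "vge v 1 (h / c)" using vge_divide[OF h c(1)] by simp
  have "vge v 1 (\<rho> + u + \<rho> * u)"
    using vge_add[OF vge_add[OF \<rho> ut(1)] vge_mono[OF vge_mult[OF \<rho> ut(1)]]] by simp
  moreover have "vge v 1 (t + h / c + t * h)"
    using vge_add[OF vge_add[OF ut(2) hc] vge_mono[OF vge_mult[OF ut(2) h]]] c(2) by simp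
  moreover have "(1 + \<rho>) * (1 + \<rho>) * z * (1 + h)
      = (1 + (\<rho> + u + \<rho> * u)) * (1 + (\<rho> + u + \<rho> * u)) * (1 + c * (t + h / c + t * h))"
    unfolding ut(3) using c(1) by (simp add: field_simps)
  ultimately show ?thesis unfolding mem_squares_times_one_plus_iff by blast
qed

lemma setmul_squares_one_plus_mono:
  assumes "A \<subseteq> setmul (squares (one_plus v 1 UNIV)) C"
  shows "setmul (setmul P (squares (one_plus v 1 F))) A
    \<subseteq> setmul (setmul P (squares (one_plus v 1 UNIV))) C"
proof
  fix z assume "z \<in> setmul (setmul P (squares (one_plus v 1 F))) A"
  then obtain k s w where z: "z = (k * (s * s)) * w" "k \<in> P" "s \<in> one_plus v 1 F" "w \<in> A"
    unfolding setmul_def squares_def by blast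
  obtain u c where w: "w = (u * u) * c" "u \<in> one_plus v 1 UNIV" "c \<in> C"
    using assms z(4) unfolding setmul_def squares_def by blast
  have "s \<in> one_plus v 1 UNIV" using z(3) unfolding one_plus_def by blast
  then have su: "s * u \<in> one_plus v 1 UNIV" using one_plus_mult w(2) by blast
  have "z = (k * ((s * u) * (s * u))) * c" using z w by (simp add: algebra_simps)
  then show "z \<in> setmul (setmul P (squares (one_plus v 1 UNIV))) C"
    unfolding setmul_def squares_def using z(2) su w(3) by blast
qed

end

lemma one_plus_factorization:
  fixes \<rho> A B r :: "'a::field"
  assumes "(1 + \<rho>) * (1 + \<rho>) = A + B" "A \<noteq> 0" "1 + \<rho> \<noteq> 0"
  shows "1 + r = (1 + \<rho>) * (1 + \<rho>) * (1 + (r + 1 - A) / A) * (1 + - B / ((1 + \<rho>) * (1 + \<rho>)))"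
proof -
  have "A + B \<noteq> 0" using assms(1,3) by (metis mult_eq_0_iff)
  then have "(1 + \<rho>) * (1 + \<rho>) * (1 + - B / ((1 + \<rho>) * (1 + \<rho>))) = A"
    unfolding assms(1) by (simp add: field_simps)
  have "(1 + \<rho>) * (1 + \<rho>) * (1 + (r + 1 - A) / A) * (1 + - B / ((1 + \<rho>) * (1 + \<rho>)))
      = (1 + \<rho>) * (1 + \<rho>) * (1 + - B / ((1 + \<rho>) * (1 + \<rho>))) * (1 + (r + 1 - A) / A)"
    by (simp only: mult_ac)
  also have "\<dots> = 1 + r" unfolding \<open>_ = A\<close> using assms(2) by (simp add: field_simps)
  finally show ?thesis by simp
qed

section \<open>Automorphisms with a single ramification break\<close>

locale break_automorphism = discrete_valued v for v :: "'a::field \<Rightarrow> int" +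
  fixes K :: "'a set" and s :: "'a \<Rightarrow> 'a" and b :: int
  assumes aut: "field_aut s" and fixes_K: "\<And>k. k \<in> K \<Longrightarrow> s k = k" and nontrivial: "s \<noteq> id"
    and K_values: "v ` (K - {0}) = {4 * n | n. True}"
    and residues_from_K: "\<And>u. u \<noteq> 0 \<Longrightarrow> v u = 0 \<Longrightarrow> \<exists>k\<in>K. vge v 1 (u - k)"
    and break: "\<And>p. p \<noteq> 0 \<Longrightarrow> v p = 1 \<Longrightarrow> v (s p - p) = b + 1"
begin

lemmas K_value = obtain_value_of_four_dvd[OF K_values]

lemmas aut_add = field_aut_add[OF aut] and aut_mult = field_aut_mult[OF aut]
  and aut_diff = field_aut_diff[OF aut] and aut_divide = field_aut_divide[OF aut]
  and aut_inverse = field_aut_inverse[OF aut] and aut_power = field_aut_power[OF aut]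
  and aut_eq_0_iff = field_aut_eq_0_iff[OF aut]

text \<open>With \<open>s p = w p\<close>, comparing the break at \<open>p\<close> and at the uniformizer \<open>k / p^3\<close> (\<open>v k = 4\<close>)
  gives \<open>v (w^3 - 1) = v (w - 1) + 3 v w\<close>, which forces \<open>v w = 0\<close>.\<close>
lemma v_aut_uniformizer:
  assumes p: "p \<noteq> 0" "v p = 1"
  shows "v (s p) = 1"
proof -
  define w where "w = s p / p"
  have w0: "w \<noteq> 0" and sp: "s p = w * p" unfolding w_def using p aut_eq_0_iff by auto
  have "v w = 0"
  proof (rule ccontr)
    assume vw: "v w \<noteq> 0"
    have "w ^ 3 \<noteq> 1" using vw v_root_of_unity[of w 3] by auto
    obtain k where k: "k \<in> K" "k \<noteq> 0" "v k = 4" using K_value[of 4] by auto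
    define p' where "p' = k / p ^ 3"
    have p': "p' \<noteq> 0" "v p' = 1" unfolding p'_def using k p by (auto simp: v_divide v_power)
    have "s p' = k / (w * p) ^ 3"
      unfolding p'_def using fixes_K[OF k(1)] sp by (simp add: aut_divide aut_power)
    then have "s p' - p' = - p' * (w ^ 3 - 1) / w ^ 3"
      unfolding p'_def using w0 p by (simp add: field_simps power_mult_distrib)
    moreover have "w ^ 3 - 1 \<noteq> 0" using \<open>w ^ 3 \<noteq> 1\<close> by simp
    ultimately have "v (s p' - p') = 1 + v (w ^ 3 - 1) - 3 * v w"
      using w0 p' by (simp add: v_mult v_divide v_power)
    moreover have "s p - p = p * (w - 1)" using sp by (simp add: algebra_simps)
    then have "v (s p - p) = 1 + v (w - 1)"
      using p vw by (cases "w = 1") (simp_all add: v_mult)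
    ultimately have "v (w ^ 3 - 1) = v (w - 1) + 3 * v w"
      using break[OF p] break[OF p'] by simp
    moreover have "v (w ^ 3) \<noteq> 0" using vw w0 by (simp add: v_power)
    moreover have "w ^ 3 \<noteq> 0" using w0 by simp
    ultimately show False
      using vw v_add_distinct(2)[of w "- 1"] v_add_distinct(2)[of "w ^ 3" "- 1"] w0
      by (simp add: v_power min_def split: if_splits)
  qed
  then show ?thesis using sp w0 p by (simp add: v_mult)
qed

lemma v_aut_unit:
  assumes u: "u \<noteq> 0" "v u = 0"
  shows "v (s u) = 0"
proof -
  obtain p where p: "p \<noteq> 0" "v p = 1" by (rule obtain_uniformizer)
  have "v (s p * s u) = 1"
    using v_aut_uniformizer[of "p * u"] p u by (simp add: v_mult aut_mult)
  then show ?thesis using v_aut_uniformizer[OF p] p u aut_eq_0_iff by (simp add: v_mult)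
qed

lemma v_aut: "a \<noteq> 0 \<Longrightarrow> v (s a) = v a"
proof -
  assume a: "a \<noteq> 0"
  obtain p where p: "p \<noteq> 0" "v p = 1" by (rule obtain_uniformizer)
  show ?thesis
    by (rule nonzero_induct_uniformizer[where P = "\<lambda>a. v (s a) = v a", OF p a])
      (simp_all add: p v_aut_unit v_aut_uniformizer[OF p] aut_mult aut_inverse aut_eq_0_iff
        v_mult v_inverse)
qed

lemma vge_aut: "vge v n a \<Longrightarrow> vge v n (s a)"
  by (cases "a = 0") (auto simp: vge_def v_aut aut_eq_0_iff)

lemma aut_diff_integral_weak:
  assumes t: "vge v 0 t"
  shows "vge v b (s t - t)"
proof -
  obtain p where p: "p \<noteq> 0" "v p = 1" by (rule obtain_uniformizer)
  have unit: "vge v b (s u - u)" if u: "u \<noteq> 0" "v u = 0" for u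
  proof -
    have "vge v (b + 1) (s (p * u) - p * u)" using break[of "p * u"] p u by (simp add: vge_def v_mult)
    moreover have "vge v (b + 1 + v (s u)) ((s p - p) * s u)"
      using break[OF p] by (intro vge_mult_right) (simp add: vge_def)
    ultimately have "vge v (b + 1) (s (p * u) - p * u - (s p - p) * s u)"
      using v_aut_unit[OF u] by (simp add: vge_diff)
    moreover have "s (p * u) - p * u - (s p - p) * s u = p * (s u - u)"
      by (simp add: aut_mult algebra_simps)
    ultimately show ?thesis using vge_divide[of "b + 1" "p * (s u - u)" p] p by simp
  qed
  show ?thesis
  proof (cases "t = 0 \<or> v t = 0")
    case True
    then show ?thesis by (cases "t = 0") (auto simp: field_aut_0[OF aut] intro: unit)
  next
    case False
    then have "vge v (v 1 + 1) t" using t by (simp add: vge_def)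
    then have "1 + t \<noteq> 0" "v (1 + t) = 0" using v_add_dominated[of 1 t] by simp_all
    from unit[OF this] show ?thesis by (simp add: aut_add field_aut_1[OF aut])
  qed
qed

lemma aut_diff_integral:
  assumes t: "vge v 0 t"
  shows "vge v (b + 1) (s t - t)"
proof -
  obtain p where p: "p \<noteq> 0" "v p = 1" by (rule obtain_uniformizer)
  have maximal: "vge v (b + 1) (s t - t)" if t: "vge v 1 t" for t
  proof -
    define t' where "t' = t / p"
    have t': "vge v 0 t'" unfolding t'_def using vge_divide[OF t p(1)] p by simp
    have "s t - t = (s p - p) * s t' + p * (s t' - t')"
      unfolding t'_def using p aut_eq_0_iff by (simp add: aut_divide field_simps)
    moreover have "vge v (b + 1 + 0) ((s p - p) * s t')"
      using break[OF p] vge_aut[OF t'] by (intro vge_mult) (simp_all add: vge_def)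
    moreover have "vge v (v p + b) (p * (s t' - t'))"
      using aut_diff_integral_weak[OF t'] by (rule vge_mult_left)
    ultimately show ?thesis using p by (simp add: vge_add add.commute)
  qed
  show ?thesis
  proof (cases "t = 0 \<or> v t \<ge> 1")
    case False
    then obtain k where k: "k \<in> K" "vge v 1 (t - k)"
      using residues_from_K[of t] t by (auto simp: vge_def)
    have eq: "s t - t = s (t - k) - (t - k)" using fixes_K[OF k(1)] by (simp add: aut_diff)
    show ?thesis unfolding eq by (rule maximal[OF k(2)])
  qed (use maximal in \<open>auto simp: vge_def\<close>)
qed

text \<open>If \<open>s\<close> fixed a uniformizer \<open>p\<close>, then for a suitable \<open>t\<close> of valuation \<open>\<ge> 2\<close> the uniformizer
  \<open>p + t\<close> would be moved by less than the break allows.\<close>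
lemma aut_moves_uniformizer:
  assumes p: "p \<noteq> 0" "v p = 1"
  shows "s p \<noteq> p"
proof
  assume sp: "s p = p"
  obtain a where a: "s a \<noteq> a" using nontrivial by (metis eq_id_iff)
  then have a0: "a \<noteq> 0" using field_aut_0[OF aut] by auto
  define N where "N = nat (2 - v a)"
  define p1 where "p1 = p + a * p ^ N"
  have "vge v (v p + 1) (a * p ^ N)" using a0 p unfolding N_def by (simp add: vge_def v_mult v_power)
  then have p1: "p1 \<noteq> 0" "v p1 = 1" unfolding p1_def using v_add_dominated[OF p(1)] p by simp_all
  have "s p1 - p1 = (s a - a) * p ^ N" unfolding p1_def using sp by (simp add: aut_add aut_mult aut_power algebra_simps)
  then have "s p1 - p1 \<noteq> 0" using a p by simp
  have "vge v 0 (p1 / p)" using p p1 by (simp add: vge_def v_divide)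
  then have "vge v (v p + (b + 1)) (p * (s (p1 / p) - p1 / p))" by (intro vge_mult_left aut_diff_integral)
  moreover have "p * (s (p1 / p) - p1 / p) = s p1 - p1" using sp p by (simp add: aut_divide field_simps)
  ultimately have "b + 2 \<le> v (s p1 - p1)" using p \<open>s p1 - p1 \<noteq> 0\<close> by (simp add: vge_def)
  then show False using break[OF p1] by simp
qed

lemma break_nonneg: "0 \<le> b"
proof -
  obtain p where p: "p \<noteq> 0" "v p = 1" by (rule obtain_uniformizer)
  have "s p + - p \<noteq> 0" using aut_moves_uniformizer[OF p] by simp
  then have "min (v (s p)) (v (- p)) \<le> v (s p + - p)"
    using v_add_ge_min[of "s p" "- p"] p aut_eq_0_iff by simp
  then show ?thesis using break[OF p] v_aut_uniformizer[OF p] p by simp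
qed

lemma aut_diff_ge:
  assumes a: "a \<noteq> 0"
  shows "vge v (v a + b) (s a - a)"
proof -
  obtain p where p: "p \<noteq> 0" "v p = 1" by (rule obtain_uniformizer)
  show ?thesis
    using p a
  proof (rule nonzero_induct_uniformizer)
    show "vge v (v u + b) (s u - u)" if "u \<noteq> 0" "v u = 0" for u
      using aut_diff_integral[of u] that by (auto simp: vge_def)
    show "vge v (v p + b) (s p - p)" using break[OF p] p by (simp add: vge_def)
  next
    fix c d assume cd: "c \<noteq> 0" "d \<noteq> 0" "vge v (v c + b) (s c - c)" "vge v (v d + b) (s d - d)"
    have eq: "s (c * d) - c * d = (s c - c) * s d + c * (s d - d)" by (simp add: aut_mult algebra_simps)
    have "vge v (v (c * d) + b) ((s c - c) * s d)"
      using vge_mult_right[OF cd(3), of "s d"] cd v_aut by (simp add: v_mult algebra_simps)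
    moreover have "vge v (v (c * d) + b) (c * (s d - d))"
      using vge_mult_left[OF cd(4), of c] cd by (simp add: v_mult algebra_simps)
    ultimately show "vge v (v (c * d) + b) (s (c * d) - c * d)" unfolding eq by (rule vge_add)
  next
    fix c assume c: "c \<noteq> 0" "vge v (v c + b) (s c - c)"
    have sc: "s c \<noteq> 0" using c aut_eq_0_iff by simp
    have "s (inverse c) - inverse c = inverse (s c) - inverse c" by (simp add: aut_inverse)
    also have "\<dots> = - (s c - c) / (c * s c)" using c sc by (simp add: field_simps)
    finally have "s (inverse c) - inverse c = - (s c - c) / (c * s c)" .
    moreover have "vge v (v c + b - v (c * s c)) (- (s c - c) / (c * s c))"
      using c sc by (intro vge_divide) (simp_all del: minus_diff_eq)
    ultimately show "vge v (v (inverse c) + b) (s (inverse c) - inverse c)"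
      using c sc v_aut by (simp add: v_mult v_inverse)
  qed
qed

lemma aut_diff_odd:
  assumes a: "a \<noteq> 0" and odd: "odd (v a)"
  shows "s a \<noteq> a" "v (s a - a) = v a + b"
proof -
  have "s a \<noteq> a \<and> v (s a - a) = v a + b"
  proof (cases "4 dvd v a - 1")
    case True
    then obtain k where k: "k \<in> K" "k \<noteq> 0" "v k = v a - 1" by (rule K_value)
    define p where "p = a / k"
    have p: "p \<noteq> 0" "v p = 1" unfolding p_def using a k by (simp_all add: v_divide)
    have "s a - a = k * (s p - p)" unfolding p_def using k fixes_K by (simp add: aut_divide field_simps)
    then show ?thesis using aut_moves_uniformizer[OF p] break[OF p] k by (auto simp: v_mult)
  next
    case False
    then have "4 dvd v a + 1" using odd by presburger
    then obtain k where k: "k \<in> K" "k \<noteq> 0" "v k = v a + 1" by (rule K_value)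
    define p where "p = k / a"
    have p: "p \<noteq> 0" "v p = 1" unfolding p_def using a k by (simp_all add: v_divide)
    have sp: "s p \<noteq> 0" "v (s p) = 1" using p aut_eq_0_iff v_aut_uniformizer by auto
    have "s a - a = k * (p - s p) / (p * s p)"
      unfolding p_def using a k fixes_K sp(1) by (simp add: aut_divide p_def field_simps)
    moreover have "v (p - s p) = b + 1" using break[OF p] by (metis minus_diff_eq v_minus)
    ultimately show ?thesis using aut_moves_uniformizer[OF p] k p sp by (auto simp: v_mult v_divide)
  qed
  then show "s a \<noteq> a" "v (s a - a) = v a + b" by auto
qed

end

section \<open>The biquadratic extension\<close>

text \<open>The whole type is the field \<open>M\<close> and \<open>v\<close> is normalized on \<open>M\<close>, so \<open>v 2 = 4 e_K\<close> and
  \<open>b\<close> is the break of \<open>M/K\<close> in the lower numbering.  The parameter \<open>\<omega>\<close> stands for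
  \<open>\<omega> + \<mu>\<close> of the statement, of which only \<open>\<omega> + \<mu> \<in> K\<close> and \<open>v (\<omega> + \<mu>) = 0\<close> are used.\<close>

locale biquadratic_setup = discrete_valued v for v :: "'a::field_char_0 \<Rightarrow> int" +
  fixes K L :: "'a set" and b :: int and \<beta> \<omega> lam x y Y :: 'a
  assumes finite_residue: "finite_residue v" and v_two_pos: "0 < v 2"
    and K_subfield: "subfield K"
    and card_galois: "card (galois_group K) = 4"
    and K_values: "v ` (K - {0}) = {4 * n | n. True}"
    and break: "\<forall>s\<in>galois_group K. s \<noteq> id \<longrightarrow> (\<forall>p. p \<noteq> 0 \<longrightarrow> v p = 1 \<longrightarrow> v (s p - p) = b + 1)"
    and \<beta>_in_K: "\<beta> \<in> K" and \<beta>_nonzero: "\<beta> \<noteq> 0" and v_\<beta>: "v \<beta> = 2 * v 2 - 4 * b"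
    and \<omega>_in_K: "\<omega> \<in> K" and \<omega>_nonzero: "\<omega> \<noteq> 0" and v_\<omega>: "v \<omega> = 0"
    and lam_in_K: "lam \<in> K" and lam_integral: "vge v 0 lam"
    and x_sq: "x ^ 2 = 1 + \<beta>"
    and y_sq: "y ^ 2 = (1 + \<omega> ^ 2 * \<beta>) * (1 + 4 * lam)"
    and M_gen: "gen_field K {x, y} = UNIV"
    and L_def: "L = gen_field K {x}"
    and Y_def: "y * Y = 1 + \<omega> * (x - 1)"
begin

lemma K_dvd:
  assumes "k \<in> K" "k \<noteq> 0"
  shows "4 dvd v k"
proof -
  have "v k \<in> v ` (K - {0})" using assms by blast
  then show ?thesis using K_values by auto
qed

lemmas K_value = obtain_value_of_four_dvd[OF K_values]

lemma four_dvd_v_two: "4 dvd v 2"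
  using K_dvd[OF subfield_numeral[OF K_subfield]] by simp

lemma x_sq_in_K: "x * x \<in> K"
  using x_sq \<beta>_in_K K_subfield by (simp add: power2_eq_square subfield_add subfield_1)

lemma y_sq_in_K: "y * y \<in> K"
  using y_sq K_subfield \<omega>_in_K \<beta>_in_K lam_in_K
  by (simp add: power2_eq_square subfield_add subfield_1 subfield_mult subfield_numeral)

lemma L_subfield: "subfield L"
  unfolding L_def by (rule subfield_gen_field)

lemma K_subset_L: "K \<subseteq> L"
  unfolding L_def by (rule gen_field_base)

lemma x_in_L: "x \<in> L"
  unfolding L_def using gen_field_gens by blast

lemma L_subset_quad_span: "L \<subseteq> quad_span K x"
  unfolding L_def
  using subfield_quad_span[OF K_subfield x_sq_in_K] base_subset_quad_span[OF K_subfield]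
    gen_in_quad_span[OF K_subfield]
  by (intro gen_field_least) auto

lemma in_quad_span_y: "u \<in> quad_span L y"
proof -
  have "gen_field K {x, y} \<subseteq> quad_span L y"
    using subfield_quad_span[OF L_subfield] y_sq_in_K K_subset_L base_subset_quad_span[OF L_subfield]
      x_in_L gen_in_quad_span[OF L_subfield]
    by (intro gen_field_least) auto
  then show ?thesis using M_gen by blast
qed

lemma L_values_even:
  assumes "l \<in> L" "l \<noteq> 0"
  shows "even (v l)"
proof (rule ccontr)
  assume odd: "odd (v l)"
  have "l * l \<in> quad_span K x" "l \<in> quad_span K x"
    using assms L_subset_quad_span subfield_mult[OF L_subfield] by auto
  moreover have "\<not> 4 dvd v l" "\<not> 4 dvd 2 * v l" using odd by presburger+
  ultimately show False
    using quad_span_value_classes[OF K_subfield K_dvd, of l x "l * l"] assms by (simp add: v_mult)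
qed

lemma L_value:
  assumes "even n"
  obtains l where "l \<in> L" "l \<noteq> 0" "v l = n"
proof -
  have "\<exists>l\<in>L. l \<noteq> 0 \<and> \<not> 4 dvd v l"
  proof (rule ccontr)
    assume "\<not> ?thesis"
    then have L4: "\<And>l. l \<in> L \<Longrightarrow> l \<noteq> 0 \<Longrightarrow> 4 dvd v l" by blast
    obtain p where p: "p \<noteq> 0" "v p = 1" by (rule obtain_uniformizer)
    have "4 dvd v (p * p) \<or> 4 dvd v (p * p) - v p"
      using p in_quad_span_y by (intro quad_span_value_classes[OF L_subfield L4]) auto
    then show False using p by (simp add: v_mult)
  qed
  then obtain l where l: "l \<in> L" "l \<noteq> 0" "\<not> 4 dvd v l" by blast
  show thesis
  proof (cases "4 dvd n")
    case True
    then obtain k where "k \<in> K" "k \<noteq> 0" "v k = n" by (rule K_value)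
    then show thesis using that[of k] K_subset_L by blast
  next
    case False
    then have "4 dvd n - v l" using assms l L_values_even[of l] by presburger
    then obtain k where k: "k \<in> K" "k \<noteq> 0" "v k = n - v l" by (rule K_value)
    then have "l * k \<in> L" using l K_subset_L subfield_mult[OF L_subfield] by blast
    then show thesis using that k l by (simp add: v_mult)
  qed
qed

lemma residues_from_K:
  assumes u: "u \<noteq> 0" "v u = 0"
  shows "\<exists>k\<in>K. vge v 1 (u - k)"
proof -
  obtain p where p: "p \<noteq> 0" "v p = 1" by (rule obtain_uniformizer)
  obtain f where f: "f \<in> L" "vge v 1 (u - f)"
    using quad_span_residue_rep[OF L_subfield, of 2 p y u] L_values_even in_quad_span_y p u by auto
  have "vge v (v u + 1) (- (u - f))" by (subst vge_minus) (simp add: f(2) u)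
  from v_add_dominated[OF u(1) this] have f0: "f \<noteq> 0" "v f = 0" using u by simp_all
  obtain l where l: "l \<in> L" "l \<noteq> 0" "v l = 2" using L_value[of 2] by auto
  obtain k where k: "k \<in> K" "vge v 1 (f - k)"
    using quad_span_residue_rep[OF K_subfield, of 4 l x f] K_dvd L_subset_quad_span l f f0 by auto
  have "vge v 1 ((u - f) + (f - k))" by (rule vge_add[OF f(2) k(2)])
  then show ?thesis using k(1) by auto
qed

abbreviation "G \<equiv> galois_group K"

lemma galois_aut: "s \<in> G \<Longrightarrow> field_aut s"
  by (simp add: galois_group_def)

lemma galois_fixes_K: "s \<in> G \<Longrightarrow> k \<in> K \<Longrightarrow> s k = k"
  by (simp add: galois_group_def)

lemma galois_sign:
  assumes s: "s \<in> G" and z: "z * z \<in> K"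
  shows "s z = z \<or> s z = - z"
proof -
  have "s z * s z = z * z" using field_aut_mult[OF galois_aut[OF s]] galois_fixes_K[OF s z] by metis
  then have "(s z - z) * (s z + z) = 0" by (simp add: algebra_simps)
  then show ?thesis by (auto simp: eq_neg_iff_add_eq_0)
qed

lemma galois_eqI:
  assumes "s \<in> G" "s' \<in> G" "s x = s' x" "s y = s' y"
  shows "s = s'"
proof -
  have "gen_field K {x, y} \<subseteq> {a. s a = s' a}"
    using assms galois_fixes_K[OF assms(1)] galois_fixes_K[OF assms(2)]
    by (intro gen_field_least subfield_field_aut_agree galois_aut) auto
  then show ?thesis using M_gen by auto
qed

text \<open>The four elements of \<open>G\<close> are determined by their signs on \<open>x\<close> and \<open>y\<close>, so every sign
  pattern occurs.\<close>
lemma exists_galois_fixing_x: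
  obtains s where "s \<in> G" "s x = x" "s y = - y"
proof -
  define signs where "signs s = (s x = x, s y = y)" for s :: "'a \<Rightarrow> 'a"
  have "inj_on signs G"
  proof (rule inj_onI)
    fix s s' assume s: "s \<in> G" "s' \<in> G" "signs s = signs s'"
    have "s x = s' x" using s galois_sign[OF s(1) x_sq_in_K] galois_sign[OF s(2) x_sq_in_K]
      unfolding signs_def by auto
    moreover have "s y = s' y" using s galois_sign[OF s(1) y_sq_in_K] galois_sign[OF s(2) y_sq_in_K]
      unfolding signs_def by auto
    ultimately show "s = s'" using galois_eqI s by blast
  qed
  moreover have "card (UNIV :: (bool \<times> bool) set) = 4"
  proof -
    have U: "(UNIV :: (bool \<times> bool) set) = {(True, True), (True, False), (False, True), (False, False)}"
      by auto
    show ?thesis by (simp only: U) simp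
  qed
  ultimately have "card (signs ` G) = card (UNIV :: (bool \<times> bool) set)"
    using card_galois by (simp add: card_image)
  then have "signs ` G = UNIV" by (simp add: card_subset_eq)
  then obtain s where s: "s \<in> G" "signs s = (True, False)" by (metis UNIV_I imageE)
  then have "s y = - y" using galois_sign[OF s(1) y_sq_in_K] unfolding signs_def by auto
  then show thesis using that s unfolding signs_def by auto
qed

definition \<sigma> :: "'a \<Rightarrow> 'a" where
  "\<sigma> = (SOME s. s \<in> G \<and> s x = x \<and> s y = - y)"

lemma \<sigma>: "\<sigma> \<in> G" "\<sigma> x = x" "\<sigma> y = - y"
proof -
  have "\<exists>s. s \<in> G \<and> s x = x \<and> s y = - y" using exists_galois_fixing_x by metis
  from someI_ex[OF this] show "\<sigma> \<in> G" "\<sigma> x = x" "\<sigma> y = - y" unfolding \<sigma>_def by auto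
qed

lemma y_nonzero: "y \<noteq> 0"
proof
  assume "y = 0"
  obtain p where p: "p \<noteq> 0" "v p = 1" by (rule obtain_uniformizer)
  obtain a c where "a \<in> L" "p = a + c * y" using in_quad_span_y by (rule quad_spanE)
  then have "p \<in> L" using \<open>y = 0\<close> by simp
  then show False using L_values_even[of p] p by simp
qed

lemma \<sigma>_nontrivial: "\<sigma> \<noteq> id"
proof
  assume "\<sigma> = id"
  then have "y = - y" using \<sigma>(3) by simp
  then show False using y_nonzero by simp
qed

lemma \<sigma>_fixes_L: "l \<in> L \<Longrightarrow> \<sigma> l = l"
proof -
  have "field_aut (\<lambda>a. a)" by (auto simp: field_aut_def bij_def inj_on_def surj_def)
  then have "L \<subseteq> {a. \<sigma> a = a}"
    unfolding L_def using \<sigma> galois_fixes_K[OF \<sigma>(1)]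
    by (intro gen_field_least subfield_field_aut_agree[OF galois_aut[OF \<sigma>(1)]]) auto
  then show "l \<in> L \<Longrightarrow> \<sigma> l = l" by auto
qed

sublocale \<sigma>: break_automorphism v K \<sigma> b
proof
  show "field_aut \<sigma>" using galois_aut[OF \<sigma>(1)] .
  show "\<sigma> \<noteq> id" by (rule \<sigma>_nontrivial)
  show "\<And>p. p \<noteq> 0 \<Longrightarrow> v p = 1 \<Longrightarrow> v (\<sigma> p - p) = b + 1" using break \<sigma>(1) \<sigma>_nontrivial by blast
  show "\<And>k. k \<in> K \<Longrightarrow> \<sigma> k = k" using galois_fixes_K[OF \<sigma>(1)] .
  show "v ` (K - {0}) = {4 * n |n. True}" by (rule K_values)
  show "\<And>u. u \<noteq> 0 \<Longrightarrow> v u = 0 \<Longrightarrow> \<exists>k\<in>K. vge v 1 (u - k)" by (rule residues_from_K)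
qed

lemma y_Y_in_L: "y * Y \<in> L"
  unfolding Y_def using L_subfield K_subset_L \<omega>_in_K x_in_L
  by (auto simp: subfield_add subfield_mult subfield_diff subfield_1)

lemma Y_nonzero: "Y \<noteq> 0"
proof
  assume "Y = 0"
  then have "1 + \<omega> * (x - 1) = 0" using Y_def by simp
  then have "x = 1 - 1 / \<omega>" using \<omega>_nonzero by (simp add: field_simps)
  then have "x \<in> K" using K_subfield \<omega>_in_K by (simp add: subfield_diff subfield_divide subfield_1)
  then have "L \<subseteq> K" unfolding L_def by (intro gen_field_least[OF K_subfield]) auto
  moreover obtain l where l: "l \<in> L" "l \<noteq> 0" "v l = 2" using L_value[of 2] by auto
  ultimately have "4 dvd v l" using K_dvd by blast
  then show False using l by simp
qed

lemma \<sigma>_Y: "\<sigma> Y = - Y"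
proof -
  have "\<sigma> y * \<sigma> Y = y * Y" using \<sigma>_fixes_L[OF y_Y_in_L] \<sigma>.aut_mult by simp
  have "y * (\<sigma> Y + Y) = - (\<sigma> y * \<sigma> Y) + y * Y" using \<sigma>(3) by (simp add: algebra_simps)
  also have "\<dots> = 0" using \<open>\<sigma> y * \<sigma> Y = y * Y\<close> by simp
  finally show ?thesis using y_nonzero by (simp add: eq_neg_iff_add_eq_0)
qed

lemma Y_sq_in_L: "Y * Y \<in> L"
proof -
  have "y * y \<in> L" using y_sq_in_K K_subset_L by blast
  then have "(y * Y) * (y * Y) / (y * y) \<in> L"
    by (rule subfield_divide[OF L_subfield subfield_mult[OF L_subfield y_Y_in_L y_Y_in_L]])
  moreover have "(y * Y) * (y * Y) / (y * y) = Y * Y" using y_nonzero by simp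
  ultimately show ?thesis by simp
qed

lemma in_quad_span_Y: "u \<in> quad_span L Y"
proof -
  obtain a c where ac: "a \<in> L" "c \<in> L" "u = a + c * y" using in_quad_span_y by (rule quad_spanE)
  define c' where "c' = c * (y * Y) / (Y * Y)"
  have "c' \<in> L"
    unfolding c'_def using ac(2) y_Y_in_L Y_sq_in_L L_subfield by (simp only: subfield_mult subfield_divide)
  moreover have "u = a + c' * Y" unfolding c'_def using ac(3) Y_nonzero by (simp add: field_simps)
  ultimately show ?thesis using quad_spanI[OF ac(1)] by simp
qed

lemma v_Y_even: "even (v Y)"
proof -
  have "4 dvd v (y * y)" using K_dvd y_sq_in_K y_nonzero by simp
  moreover have "even (v (y * Y))" using L_values_even y_Y_in_L y_nonzero Y_nonzero by simp
  ultimately show ?thesis using y_nonzero Y_nonzero by (simp add: v_mult) presburger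
qed

lemma exists_odd_approx_Y:
  obtains \<kappa> where "\<kappa> \<in> L" "Y - \<kappa> \<noteq> 0" "odd (v (Y - \<kappa>))"
proof -
  obtain p where p: "p \<noteq> 0" "v p = 1" by (rule obtain_uniformizer)
  obtain a c where ac: "a \<in> L" "c \<in> L" "p = a + c * Y" using in_quad_span_Y by (rule quad_spanE)
  have "c \<noteq> 0"
    using ac p L_values_even[of p] by auto
  then have "Y - (- a / c) = p / c" "v (p / c) = 1 - v c" using ac(3) p by (simp_all add: field_simps v_divide)
  moreover have "even (v c)" using L_values_even ac(2) \<open>c \<noteq> 0\<close> by blast
  moreover have "- a / c \<in> L" using ac L_subfield by (simp add: subfield_divide subfield_uminus)
  ultimately show thesis using that[of "- a / c"] p \<open>c \<noteq> 0\<close> by simp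
qed

lemma \<sigma>_diff_Y:
  assumes "\<kappa> \<in> L"
  shows "\<sigma> (Y - \<kappa>) - (Y - \<kappa>) = - (2 * Y)"
proof -
  have "\<sigma> (Y - \<kappa>) = - Y - \<kappa>" using \<sigma>_Y \<sigma>_fixes_L[OF assms] by (simp add: \<sigma>.aut_diff)
  then show ?thesis by simp
qed

lemma v_\<sigma>_diff_Y: "\<kappa> \<in> L \<Longrightarrow> v (\<sigma> (Y - \<kappa>) - (Y - \<kappa>)) = v 2 + v Y"
  using Y_nonzero by (simp add: \<sigma>_diff_Y v_mult)

lemma break_odd: "odd b"
proof -
  obtain \<kappa> where \<kappa>: "\<kappa> \<in> L" "Y - \<kappa> \<noteq> 0" "odd (v (Y - \<kappa>))" by (rule exists_odd_approx_Y)
  have "v (Y - \<kappa>) + b = v 2 + v Y" using \<sigma>.aut_diff_odd(2)[OF \<kappa>(2,3)] v_\<sigma>_diff_Y[OF \<kappa>(1)] by simp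
  then show ?thesis using four_dvd_v_two v_Y_even \<kappa>(3) by presburger
qed

lemma break_pos: "1 \<le> b"
  using \<sigma>.break_nonneg break_odd by presburger

lemma break_lt_v_two: "b < v 2"
proof -
  have "\<sigma> Y - Y = - (2 * Y)" using \<sigma>_Y by simp
  moreover have "vge v (v Y + b) (\<sigma> Y - Y)" by (rule \<sigma>.aut_diff_ge[OF Y_nonzero])
  ultimately have "vge v (v Y + b) (- (2 * Y))" by metis
  then have "b \<le> v 2" using Y_nonzero by (simp add: vge_def v_mult)
  then show ?thesis using break_odd four_dvd_v_two by presburger
qed

lemma v_x_minus_one: "x - 1 \<noteq> 0" "v (x - 1) = v 2 - 2 * b"
proof -
  have prod: "(x - 1) * (x + 1) = \<beta>" using x_sq by (simp add: algebra_simps power2_eq_square)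
  then have x1: "x - 1 \<noteq> 0" using \<beta>_nonzero by auto
  have "v (x - 1) < v 2"
  proof (rule ccontr)
    assume "\<not> ?thesis"
    then have "vge v (v 2) (x - 1)" by (simp add: vge_def)
    moreover have "vge v (v 2) ((x - 1) + 2)" using vge_add[OF calculation vge_self] .
    moreover have "(x - 1) + 2 = x + 1" by simp
    ultimately have "vge v (v 2) (x - 1)" "vge v (v 2) (x + 1)" by simp_all
    then have "vge v (v 2 + v 2) \<beta>" using vge_mult prod by metis
    then show False using v_\<beta> \<beta>_nonzero break_pos by (simp add: vge_def)
  qed
  then have "vge v (v (x - 1) + 1) 2" by (simp add: vge_def)
  from v_add_dominated[OF x1 this] have "x + 1 \<noteq> 0" "v (x + 1) = v (x - 1)"
    unfolding add_diff_eq[symmetric] by (simp_all add: algebra_simps)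
  then have "v \<beta> = 2 * v (x - 1)" using prod x1 by (metis v_mult mult_2)
  then show "x - 1 \<noteq> 0" "v (x - 1) = v 2 - 2 * b" using x1 v_\<beta> by simp_all
qed

lemma v_\<beta>_nonzero: "v \<beta> \<noteq> 0"
  using v_\<beta> break_odd four_dvd_v_two by presburger

lemma v_one_plus_\<beta>: "1 + \<omega> ^ 2 * \<beta> \<noteq> 0" "v (1 + \<omega> ^ 2 * \<beta>) = min (v \<beta>) 0"
  using v_one_plus[of "\<omega> ^ 2 * \<beta>"] v_\<beta>_nonzero v_\<omega> \<omega>_nonzero \<beta>_nonzero
  by (auto simp: v_mult v_power)

lemma v_one_plus_lam: "1 + 4 * lam \<noteq> 0" "v (1 + 4 * lam) = 0"
proof -
  have "v (4::'a) = 2 * v 2" using v_mult[of 2 2] v_two_pos by fastforce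
  then have "vge v (v 1 + 1) (4 * lam)"
    using vge_mult_left[OF lam_integral, of 4] v_two_pos by (elim vge_mono) simp
  from v_add_dominated[OF _ this] show "1 + 4 * lam \<noteq> 0" "v (1 + 4 * lam) = 0" by simp_all
qed

lemma v_y_sq: "v (y * y) = min (v \<beta>) 0"
  using y_sq v_one_plus_\<beta> v_one_plus_lam by (simp add: power2_eq_square v_mult)

text \<open>Both \<open>y\<close> and \<open>y Y = 1 + \<omega> (x - 1)\<close> have valuation \<open>min (v \<beta> / 2) 0\<close>.\<close>
lemma v_Y: "v Y = 0"
proof -
  have "v (\<omega> * (x - 1)) = v \<beta> div 2" using \<omega>_nonzero v_\<omega> v_x_minus_one v_\<beta> by (simp add: v_mult)
  then have "v (y * Y) = min (v \<beta> div 2) 0"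
    unfolding Y_def using v_one_plus[of "\<omega> * (x - 1)"] v_\<beta>_nonzero v_\<beta> \<omega>_nonzero v_x_minus_one
    by auto
  moreover have "2 * v y = min (v \<beta>) 0" using v_y_sq y_nonzero by (simp add: v_mult)
  ultimately show ?thesis using y_nonzero Y_nonzero v_\<beta> by (simp add: v_mult)
qed

lemma Y_minus_one: "Y - 1 \<noteq> 0" "v (Y - 1) \<le> v 2 - b" "0 \<le> v (Y - 1)"
proof -
  show "Y - 1 \<noteq> 0"
  proof
    assume "Y - 1 = 0"
    then have "\<sigma> 1 = - 1" using \<sigma>_Y by simp
    then show False using field_aut_1[OF \<sigma>.aut] by simp
  qed
  then have "vge v (v (Y - 1) + b) (- (2 * Y))"
    using \<sigma>.aut_diff_ge \<sigma>_diff_Y[OF subfield_1[OF L_subfield]] by metis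
  then show "v (Y - 1) \<le> v 2 - b" using v_Y Y_nonzero by (simp add: vge_def v_mult)
  have "vge v 0 (Y - 1)" using v_Y by (intro vge_diff) (simp_all add: vge_def)
  then show "0 \<le> v (Y - 1)" using \<open>Y - 1 \<noteq> 0\<close> by (simp add: vge_def)
qed

lemma v_four: "v 4 = 2 * v 2"
  using v_mult[of 2 2] by simp

lemma Y_sq_minus_one_eq:
  "y * y * (Y * Y - 1) = 2 * \<omega> * (1 - \<omega>) * (x - 1) - 4 * lam * (1 + \<omega> ^ 2 * \<beta>)"
proof -
  have "y * y * (Y * Y - 1) = (y * Y) * (y * Y) - y * y" by (simp add: algebra_simps)
  also have "\<dots> = (1 + \<omega> * (x - 1)) * (1 + \<omega> * (x - 1)) - (1 + \<omega> ^ 2 * \<beta>) * (1 + 4 * lam)"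
    using Y_def y_sq by (simp add: power2_eq_square)
  also have "\<dots> = 2 * \<omega> * (1 - \<omega>) * (x - 1) - 4 * lam * (1 + \<omega> ^ 2 * \<beta>) + \<omega> ^ 2 * (x ^ 2 - (1 + \<beta>))"
    by (simp add: algebra_simps power2_eq_square)
  finally show ?thesis using x_sq by simp
qed

text \<open>If \<open>v \<beta> < 0\<close>, then \<open>Y^2 - 1 = y^{-2} (2 \<omega> (1 - \<omega>) (x - 1) - 4 lam (1 + \<omega>^2 \<beta>))\<close> has valuation
  at least \<open>2 b\<close>, while \<open>Y^2 - 1 = (Y - 1)^2 + 2 (Y - 1)\<close> has valuation \<open>2 v (Y - 1) \<le> 2 v 2 - 2 b < 2 b\<close>.\<close>
lemma v_\<beta>_pos: "0 < v \<beta>"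
proof (rule ccontr)
  assume "\<not> 0 < v \<beta>"
  then have neg: "v 2 < 2 * b" using v_\<beta> v_\<beta>_nonzero by simp
  define z where "z = Y - 1"
  have z: "z \<noteq> 0" "v z \<le> v 2 - b" using Y_minus_one unfolding z_def by simp_all
  have zz: "Y * Y - 1 = z * z + 2 * z" unfolding z_def by (simp add: algebra_simps)
  have "vge v (v (z * z) + 1) (2 * z)" using z break_pos by (simp add: vge_def v_mult)
  from v_add_dominated[OF _ this] have "z * z + 2 * z \<noteq> 0" "v (z * z + 2 * z) = v (z * z)"
    using z by simp_all
  then have upper: "Y * Y - 1 \<noteq> 0" "v (Y * Y - 1) = 2 * v z" unfolding zz using z by (simp_all add: v_mult)
  have "vge v 0 (1 - \<omega>)" using v_\<omega> by (intro vge_diff) (simp_all add: vge_def)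
  then have "vge v (v 2 + 0 + 0 + v (x - 1)) (2 * \<omega> * (1 - \<omega>) * (x - 1))"
    using v_\<omega> by (intro vge_mult vge_self) (simp_all add: vge_def)
  then have t1: "vge v (2 * v 2 - 2 * b) (2 * \<omega> * (1 - \<omega>) * (x - 1))"
    using v_x_minus_one by simp
  have "vge v (2 * v 2 + 0 + v (1 + \<omega> ^ 2 * \<beta>)) (4 * lam * (1 + \<omega> ^ 2 * \<beta>))"
    using vge_mult[OF vge_mult[OF vge_self[of 4] lam_integral] vge_self] v_four by simp
  then have t2: "vge v (2 * v 2 - 2 * b) (4 * lam * (1 + \<omega> ^ 2 * \<beta>))"
    using v_one_plus_\<beta> v_\<beta> neg break_lt_v_two by (elim vge_mono) simp
  have "vge v (2 * v 2 - 2 * b) (y * y * (Y * Y - 1))"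
    unfolding Y_sq_minus_one_eq using vge_diff[OF t1 t2] .
  then have "2 * v 2 - 2 * b \<le> min (v \<beta>) 0 + 2 * v z"
    using upper y_nonzero v_y_sq by (simp add: vge_def v_mult)
  then show False using z v_\<beta> neg by linarith
qed

lemma approx_Y:
  obtains \<kappa> where "\<kappa> \<in> L" "v \<kappa> = 0" "Y - \<kappa> \<noteq> 0" "v (Y - \<kappa>) = v 2 - b"
proof -
  obtain \<kappa> where \<kappa>: "\<kappa> \<in> L" "Y - \<kappa> \<noteq> 0" "odd (v (Y - \<kappa>))" by (rule exists_odd_approx_Y)
  have v_diff: "v (Y - \<kappa>) = v 2 - b"
    using \<sigma>.aut_diff_odd(2)[OF \<kappa>(2,3)] v_\<sigma>_diff_Y[OF \<kappa>(1)] v_Y by simp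
  have "vge v (v Y + 1) (- (Y - \<kappa>))"
    by (subst vge_minus) (use v_diff v_Y break_lt_v_two in \<open>simp add: vge_def\<close>)
  from v_add_dominated(2)[OF Y_nonzero this] have "v \<kappa> = 0" using v_Y by simp
  then show thesis using that \<kappa> v_diff by blast
qed

text \<open>The two ways of completing a square used in the descent: by an element of \<open>L\<close> when
  \<open>4\<close> divides the valuation \<open>m\<close> to be removed, and by a multiple of \<open>Y - \<kappa>\<close> otherwise, using
  \<open>(Y - \<kappa>)^2 + 2 \<kappa> (Y - \<kappa>) = Y^2 - \<kappa>^2 \<in> L\<close>.\<close>
lemma square_completion_data:
  assumes "even m"
  obtains Z \<kappa> Gm where "Gm \<in> L" "Gm \<noteq> 0" "Z * Z + 2 * \<kappa> * Z = Gm" "v Gm = 2 * v Z"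
    "4 dvd m - v Gm" "\<kappa> = 0 \<or> (v \<kappa> = 0 \<and> v Z = v 2 - b)"
proof (cases "4 dvd m")
  case True
  show thesis using that[of 1 1 0] True subfield_1[OF L_subfield] by simp
next
  case False
  obtain \<kappa> where \<kappa>: "\<kappa> \<in> L" "v \<kappa> = 0" "Y - \<kappa> \<noteq> 0" "v (Y - \<kappa>) = v 2 - b" by (rule approx_Y)
  define Z where "Z = Y - \<kappa>"
  have eq: "Z * Z + 2 * \<kappa> * Z = Y * Y - \<kappa> * \<kappa>" unfolding Z_def by (simp add: algebra_simps)
  have "Y * Y - \<kappa> * \<kappa> \<in> L"
    using Y_sq_in_L \<kappa>(1) L_subfield by (simp add: subfield_diff subfield_mult)
  moreover have "\<kappa> \<noteq> 0"
  proof
    assume "\<kappa> = 0"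
    then show False using \<kappa>(4) v_Y break_lt_v_two by simp
  qed
  then have "vge v (v (Z * Z) + 1) (2 * \<kappa> * Z)"
    using \<kappa> break_pos unfolding Z_def by (simp add: vge_def v_mult)
  from v_add_dominated[OF _ this] have "Z * Z + 2 * \<kappa> * Z \<noteq> 0" "v (Z * Z + 2 * \<kappa> * Z) = 2 * v Z"
    using \<kappa>(3) unfolding Z_def by (simp_all add: v_mult)
  moreover have "4 dvd m - (2 * v 2 - 2 * b)"
    using assms False four_dvd_v_two break_odd by presburger
  ultimately show thesis
    using that[of "Y * Y - \<kappa> * \<kappa>" Z \<kappa>] eq \<kappa> unfolding Z_def by simp
qed

lemma L_square_approx:
  assumes r: "r \<in> L" "r \<noteq> 0" and Gm: "Gm \<in> L" "Gm \<noteq> 0" "4 dvd v r - v Gm"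
  obtains c where "c \<in> L" "2 * v c = v r - v Gm" "vge v (v r + 1) (r - c * c * Gm)"
proof -
  have "even ((v r - v Gm) div 2)" using Gm(3) by presburger
  then obtain l where l: "l \<in> L" "l \<noteq> 0" "v l = (v r - v Gm) div 2" by (rule L_value)
  define u where "u = r / (l * l * Gm)"
  have llG: "l * l * Gm \<in> L" "l * l * Gm \<noteq> 0" "v (l * l * Gm) = v r"
    using l Gm L_subfield by (auto simp: subfield_mult v_mult)
  then have u: "u \<in> L" "vge v 0 u" "v u = 0" "u \<noteq> 0"
    unfolding u_def using r L_subfield by (simp_all add: subfield_divide vge_def v_divide)
  obtain s where s: "s \<in> L" "vge v 1 (u - s * s)"
    using residue_square_root[OF finite_residue v_two_pos L_subfield u(1,2)] by blast
  have "vge v (v u + 1) (- (u - s * s))" using s(2) u(3) by (subst vge_minus) simp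
  from v_add_dominated[OF u(4) this] have "s * s \<noteq> 0" "v (s * s) = 0" using u(3) by simp_all
  then have s0: "s \<noteq> 0" "v s = 0" by (auto simp: v_mult)
  have "r - (l * s) * (l * s) * Gm = (l * l * Gm) * (u - s * s)"
    unfolding u_def using llG by (simp add: field_simps)
  then have "vge v (v r + 1) (r - (l * s) * (l * s) * Gm)"
    using vge_mult_left[OF s(2), of "l * l * Gm"] llG by (simp add: add.commute)
  moreover have "l * s \<in> L" using l s L_subfield by (simp add: subfield_mult)
  moreover have "2 * v l = v r - v Gm" using l(3) Gm(3) by presburger
  then have "2 * v (l * s) = v r - v Gm" using l s0 by (simp add: v_mult)
  ultimately show thesis using that by blast
qed

text \<open>With \<open>\<rho> = c Z\<close> and \<open>c^2 Gm\<close> close to \<open>r\<close>, we get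
  \<open>(1 + \<rho>)^2 = 1 + c^2 Gm + 2 c Z (1 - c \<kappa>)\<close>; the bounds make the last term negligible.\<close>
lemma descent_step:
  assumes r: "r \<in> L" "r \<noteq> 0" "2 \<le> v r"
    and Gm: "Gm \<in> L" "Gm \<noteq> 0" "Z * Z + 2 * \<kappa> * Z = Gm" "v Gm = 2 * v Z" "4 dvd v r - v Gm"
    and bounds: "2 * thr \<le> 2 * v 2 + v r" "vge v (thr - v 2 - v r + v Z) \<kappa>"
  obtains \<rho> r' h where "vge v 1 \<rho>" "r' \<in> L" "vge v (v r + 1) r'" "vge v thr h"
    "1 + r = (1 + \<rho>) * (1 + \<rho>) * (1 + r') * (1 + h)"
proof -
  have Z: "Z \<noteq> 0" using Gm(2,3) by auto
  obtain c where c: "c \<in> L" "2 * v c = v r - v Gm" "vge v (v r + 1) (r - c * c * Gm)"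
    using L_square_approx[OF r(1,2) Gm(1,2,5)] by blast
  have c0: "c \<noteq> 0" using c(3) r(2) Gm(2) by (auto simp: vge_def)
  define \<rho> where "\<rho> = c * Z"
  have v\<rho>: "2 * v \<rho> = v r" unfolding \<rho>_def using c c0 Z Gm(4) by (simp add: v_mult)
  then have \<rho>: "vge v 1 \<rho>" "1 + \<rho> \<noteq> 0" "v (1 + \<rho>) = 0"
    using r(3) v_add_dominated[of 1 \<rho>] by (auto simp: vge_def)
  define A where "A = 1 + c * c * Gm"
  have "v (c * c * Gm) = v r" using c c0 Gm by (simp add: v_mult)
  then have A: "A \<in> L" "A \<noteq> 0" "v A = 0"
    unfolding A_def using v_add_dominated[of 1 "c * c * Gm"] r c Gm L_subfield
    by (auto simp: vge_def subfield_add subfield_mult subfield_1)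
  define B where "B = 2 * c * Z - 2 * c * c * \<kappa> * Z"
  have sq: "(1 + \<rho>) * (1 + \<rho>) = A + B"
    unfolding \<rho>_def A_def B_def Gm(3)[symmetric] by (simp add: algebra_simps)
  have "vge v (v 2 + v c + v Z) (2 * c * Z)" by (intro vge_mult vge_self)
  then have "vge v thr (2 * c * Z)" using bounds(1) c(2) Gm(4) by (elim vge_mono) linarith
  moreover have "vge v (v 2 + v c + v c + (thr - v 2 - v r + v Z) + v Z) (2 * c * c * \<kappa> * Z)"
    using bounds(2) by (intro vge_mult vge_self)
  then have "vge v thr (2 * c * c * \<kappa> * Z)" using c(2) Gm(4) by (elim vge_mono) linarith
  ultimately have "vge v thr B" unfolding B_def by (rule vge_diff)
  then have h: "vge v thr (- B / ((1 + \<rho>) * (1 + \<rho>)))"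
    using vge_divide[of thr "- B" "(1 + \<rho>) * (1 + \<rho>)"] \<rho> by (simp add: v_mult)
  have "(r + 1 - A) / A \<in> L"
    using r A L_subfield by (simp add: subfield_divide subfield_diff subfield_add subfield_1)
  moreover have "vge v (v r + 1) ((r + 1 - A) / A)"
    using vge_divide[OF c(3) A(2)] A(3) unfolding A_def by (simp add: algebra_simps)
  ultimately show thesis
    using that[OF \<rho>(1) _ _ h one_plus_factorization[OF sq A(2) \<rho>(2)]] by blast
qed

lemma L_one_plus_in_squares_times_one_plus:
  assumes c: "c \<noteq> 0" "0 \<le> v c"
    and m0: "2 \<le> m0" "2 * (v c + 1) \<le> 2 * v 2 + m0" "v c + 1 \<le> m0 + b"
    and r: "r \<in> L" "vge v m0 r"
  shows "1 + r \<in> squares_times_one_plus c"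
  using r
proof (induction "nat (v c + 1 - v r)" arbitrary: r rule: less_induct)
  case less
  show ?case
  proof (cases "vge v (v c + 1) r")
    case True
    then show ?thesis by (rule one_plus_in_squares_times_one_plus[OF c(1)])
  next
    case False
    then have r0: "r \<noteq> 0" and lt: "v r \<le> v c" by (auto simp: vge_def)
    have m: "m0 \<le> v r" "even (v r)" using less.prems r0 L_values_even by (auto simp: vge_def)
    obtain Z \<kappa> Gm where Gm: "Gm \<in> L" "Gm \<noteq> 0" "Z * Z + 2 * \<kappa> * Z = Gm" "v Gm = 2 * v Z"
      "4 dvd v r - v Gm" and \<kappa>: "\<kappa> = 0 \<or> (v \<kappa> = 0 \<and> v Z = v 2 - b)"
      using square_completion_data[OF m(2)] by blast
    have "vge v (v c + 1 - v 2 - v r + v Z) \<kappa>" using \<kappa> m m0 by (auto simp: vge_def)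
    moreover have "2 \<le> v r" "2 * (v c + 1) \<le> 2 * v 2 + v r" using m(1) m0(1,2) by linarith+
    ultimately obtain \<rho> r' h where step: "vge v 1 \<rho>" "r' \<in> L" "vge v (v r + 1) r'"
      "vge v (v c + 1) h" "1 + r = (1 + \<rho>) * (1 + \<rho>) * (1 + r') * (1 + h)"
      using descent_step[OF less.prems(1) r0 _ Gm] by blast
    have "1 + r' \<in> squares_times_one_plus c"
    proof (cases "r' = 0")
      case True
      then show ?thesis using one_plus_in_squares_times_one_plus[OF c(1) vge_zero] by simp
    next
      case False
      then have "nat (v c + 1 - v r') < nat (v c + 1 - v r)" using step(3) lt by (auto simp: vge_def)
      moreover have "vge v m0 r'" using step(3) m by (elim vge_mono) simp
      ultimately show ?thesis by (rule less.hyps[OF _ step(2)])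
    qed
    then show ?thesis using squares_times_one_plus_mult[OF c step(1) step(4)] step(5) by simp
  qed
qed

lemma one_plus_L_subset_squares_times_one_plus:
  assumes d: "d \<in> L" "d \<noteq> 0" and c: "c \<noteq> 0" "0 \<le> v c"
    and bounds: "1 \<le> v d" "2 * v c + 1 \<le> 2 * v 2 + v d" "v c \<le> v d + b"
  shows "one_plus v d L \<subseteq> squares_times_one_plus c"
proof
  fix z assume "z \<in> one_plus v d L"
  then obtain t where t: "z = 1 + d * t" "t \<in> L" "vge v 1 t" unfolding one_plus_def by blast
  have "d * t \<in> L" using d t L_subfield by (simp add: subfield_mult)
  moreover have "vge v (v d + 1) (d * t)" using t(3) by (rule vge_mult_left)
  ultimately show "z \<in> squares_times_one_plus c"
    unfolding t(1) using bounds by (intro L_one_plus_in_squares_times_one_plus[OF c, of "v d + 1"]) simp_all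
qed

lemma one_plus_half_\<beta>_subset:
  assumes "4 * b < v 2"
  shows "one_plus v ((\<beta> / 2) * (x - 1)) L \<subseteq> squares_times_one_plus ((\<beta> / 2) * (Y - 1))"
proof (rule one_plus_L_subset_squares_times_one_plus)
  show "(\<beta> / 2) * (x - 1) \<in> L" using \<beta>_in_K K_subset_L x_in_L L_subfield
    by (auto simp: subfield_mult subfield_divide subfield_diff subfield_1 subfield_numeral)
  show "(\<beta> / 2) * (x - 1) \<noteq> 0" "(\<beta> / 2) * (Y - 1) \<noteq> 0"
    using \<beta>_nonzero v_x_minus_one Y_minus_one by simp_all
  have "v ((\<beta> / 2) * (x - 1)) = 2 * v 2 - 6 * b" "v ((\<beta> / 2) * (Y - 1)) = v 2 - 4 * b + v (Y - 1)"
    using \<beta>_nonzero v_x_minus_one Y_minus_one v_\<beta> by (simp_all add: v_mult v_divide)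
  then show "0 \<le> v ((\<beta> / 2) * (Y - 1))" "1 \<le> v ((\<beta> / 2) * (x - 1))"
    "2 * v ((\<beta> / 2) * (Y - 1)) + 1 \<le> 2 * v 2 + v ((\<beta> / 2) * (x - 1))"
    "v ((\<beta> / 2) * (Y - 1)) \<le> v ((\<beta> / 2) * (x - 1)) + b"
    using assms Y_minus_one break_pos four_dvd_v_two by presburger+
qed

lemma one_plus_\<beta>_subset:
  "one_plus v \<beta> L \<subseteq> squares_times_one_plus ((x - 1) * (Y - 1))"
proof (rule one_plus_L_subset_squares_times_one_plus)
  show "\<beta> \<in> L" "\<beta> \<noteq> 0" using \<beta>_in_K K_subset_L \<beta>_nonzero by auto
  show "(x - 1) * (Y - 1) \<noteq> 0" using v_x_minus_one Y_minus_one by simp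
  have "v ((x - 1) * (Y - 1)) = v 2 - 2 * b + v (Y - 1)"
    using v_x_minus_one Y_minus_one by (simp add: v_mult)
  then show "0 \<le> v ((x - 1) * (Y - 1))" "1 \<le> v \<beta>"
    "2 * v ((x - 1) * (Y - 1)) + 1 \<le> 2 * v 2 + v \<beta>" "v ((x - 1) * (Y - 1)) \<le> v \<beta> + b"
    using v_\<beta>_pos v_\<beta> Y_minus_one break_pos by linarith+
qed

end

theorem lemma3p3:
  fixes v :: "'a::field_char_0 \<Rightarrow> int"
    and K T L :: "'a set"
    and b :: int and q :: nat
    and \<beta> \<omega> \<mu> lam x y Y :: 'a
  assumes val: "discrete_valuation v" and compl: "val_complete v"
    and resfin: "finite_residue v" and res2: "0 < v 2"
    and K_sub: "subfield K"
    and deg: "degree_over K 4"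
    and gal4: "card (galois_group K) = 4"
    and galV4: "\<forall>s\<in>galois_group K. s \<circ> s = id"
    and totram: "v ` (K - {0}) = {4 * n | n. True}"
    and break: "\<forall>s\<in>galois_group K. s \<noteq> id \<longrightarrow> (\<forall>p. p \<noteq> 0 \<longrightarrow> v p = 1 \<longrightarrow> v (s p - p) = b + 1)"
    and T_def: "max_unram_sub v K T"
    and q_def: "q = residue_card v K"
    and \<beta>K: "\<beta> \<in> K" and \<beta>0: "\<beta> \<noteq> 0" and v\<beta>: "v \<beta> = 2 * v 2 - 4 * b"
    and \<omega>T: "\<omega> \<in> T" and \<omega>O: "vge v 0 \<omega>" and \<omega>root: "\<omega> ^ (q - 1) = 1" and \<omega>1: "\<omega> \<noteq> 1"
    and \<mu>K: "\<mu> \<in> K" and \<mu>v: "\<mu> = 0 \<or> (0 < v \<mu> \<and> v \<mu> < 2 * b)"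
    and lamT: "lam \<in> T" and lamO: "vge v 0 lam"
    and lamc: "lam = 0 \<or> (lam ^ (q - 1) = 1 \<and> irred_artin_schreier T lam)"
    and x_eq: "x ^ 2 = 1 + \<beta>"
    and y_eq: "y ^ 2 = (1 + (\<omega> + \<mu>) ^ 2 * \<beta>) * (1 + 4 * lam)"
    and M_gen: "gen_field K {x, y} = UNIV"
    and L_def: "L = gen_field K {x}"
    and Y_def: "y * Y = 1 + (\<omega> + \<mu>) * (x - 1)"
  shows
    "(4 * b < v 2 \<longrightarrow>
        one_plus v ((\<beta> / 2) * (x - 1)) L
          \<subseteq> setmul (squares (one_plus v 1 UNIV)) (one_plus v ((\<beta> / 2) * (Y - 1)) UNIV))
     \<and> one_plus v \<beta> L
          \<subseteq> setmul (squares (one_plus v 1 UNIV)) (one_plus v ((x - 1) * (Y - 1)) UNIV)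
     \<and> (4 * b < v 2 \<longrightarrow>
        setmul (setmul (one_plus v 1 K) (squares (one_plus v 1 L))) (one_plus v ((\<beta> / 2) * (x - 1)) L)
          \<subseteq> setmul (setmul (one_plus v 1 K) (squares (one_plus v 1 UNIV))) (one_plus v ((\<beta> / 2) * (Y - 1)) UNIV))
     \<and> setmul (setmul (one_plus v 1 K) (squares (one_plus v 1 L))) (one_plus v \<beta> L)
          \<subseteq> setmul (setmul (one_plus v 1 K) (squares (one_plus v 1 UNIV))) (one_plus v ((x - 1) * (Y - 1)) UNIV)"
proof -
  interpret discrete_valued v using val by unfold_locales
  have "T \<subseteq> K" using T_def by (simp add: max_unram_sub_def)
  have "q - 1 \<noteq> 0"
    using residue_card_ge_two[OF resfin subfield_0[OF K_sub] subfield_1[OF K_sub]] q_def by simp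
  then have \<omega>: "\<omega> \<noteq> 0" "v \<omega> = 0" using \<omega>root v_root_of_unity by (auto simp: power_0_left)
  then have \<omega>\<mu>: "\<omega> + \<mu> \<noteq> 0" "v (\<omega> + \<mu>) = 0"
    using \<mu>v v_add_dominated[OF \<omega>(1), of \<mu>] by (auto simp: vge_def)
  have \<omega>\<mu>_in_K: "\<omega> + \<mu> \<in> K" using \<omega>T \<open>T \<subseteq> K\<close> \<mu>K K_sub by (auto simp: subfield_add)
  have lam_in_K: "lam \<in> K" using lamT \<open>T \<subseteq> K\<close> by blast
  interpret biquadratic_setup v K L b \<beta> "\<omega> + \<mu>" lam x y Y
    by unfold_locales
      (fact resfin res2 K_sub gal4 totram break \<beta>K \<beta>0 v\<beta> \<omega>\<mu>_in_K \<omega>\<mu> lam_in_K lamO x_eq y_eq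
        M_gen L_def Y_def)+
  have half_\<beta>_subset: "4 * b < v 2 \<Longrightarrow>
      one_plus v ((\<beta> / 2) * (x - 1)) L \<subseteq> squares_times_one_plus ((\<beta> / 2) * (Y - 1))"
    by (rule one_plus_half_\<beta>_subset)
  show ?thesis
    using half_\<beta>_subset one_plus_\<beta>_subset setmul_squares_one_plus_mono[OF half_\<beta>_subset]
      setmul_squares_one_plus_mono[OF one_plus_\<beta>_subset]
    by (intro conjI impI) simp_all
qed

end
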